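(* Fix a real number $\beta>-1$. Let $s\in\mathbb{C}$ with $0<|s|<1$ be such that $\psi_s(z)=\dfrac{sz}{1-(1-s)z}$ maps $\mathbb{D}$ into $\mathbb{D}$. Then the composition operator $C_{\psi_s}f=f\circ\psi_s$ is not cyclic on $A^2_\beta$.
   Context: $\mathbb{D}$ is the open unit disc. For $\beta>-1$, $A^2_\beta$ is the Hilbert space of analytic functions $f(z)=\sum_{n\ge0}\widehat f(n)z^n$ on $\mathbb{D}$ with inner product $\langle f,g\rangle=\sum_{n\ge0}\frac{n!\,\Gamma(2+\beta)}{\Gamma(n+2+\beta)}\widehat f(n)\overline{\widehat g(n)}$ (equivalently the $L^2$ inner product with respect to $(\beta+1)(1-|z|^2)^\beta dA(z)$). An operator $T$ on $\mathcal H$ is cyclic if there is $f\in\mathcal H$ such that the linear span of $\{T^nf:n\ge0\}$ is dense in $\mathcal H$. *)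

theory Defs
  imports "HOL-Complex_Analysis.Complex_Analysis"
begin

definition taylor_coeff :: "(complex \<Rightarrow> complex) \<Rightarrow> nat \<Rightarrow> complex" where
  "taylor_coeff f n = (deriv ^^ n) f 0 / of_nat (fact n)"

definition bergman_weight :: "real \<Rightarrow> nat \<Rightarrow> real" where
  "bergman_weight \<beta> n = fact n * Gamma (2 + \<beta>) / Gamma (real n + 2 + \<beta>)"

text \<open>The weighted Bergman space A^2_beta as a set of functions (values off the disc irrelevant).\<close>
definition A2 :: "real \<Rightarrow> (complex \<Rightarrow> complex) set" where
  "A2 \<beta> = {f. f holomorphic_on ball 0 1 \<and>
              summable (\<lambda>n. bergman_weight \<beta> n * (cmod (taylor_coeff f n))\<^sup>2)}"

definition A2_norm :: "real \<Rightarrow> (complex \<Rightarrow> complex) \<Rightarrow> real" where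
  "A2_norm \<beta> f = sqrt (\<Sum>n. bergman_weight \<beta> n * (cmod (taylor_coeff f n))\<^sup>2)"

definition cyclic_on_A2 :: "real \<Rightarrow> ((complex \<Rightarrow> complex) \<Rightarrow> (complex \<Rightarrow> complex)) \<Rightarrow> bool" where
  "cyclic_on_A2 \<beta> T \<longleftrightarrow>
     (\<exists>f\<in>A2 \<beta>. \<forall>g\<in>A2 \<beta>. \<forall>\<epsilon>>0. \<exists>N::nat. \<exists>c::nat \<Rightarrow> complex.
        A2_norm \<beta> (\<lambda>z. g z - (\<Sum>k<N. c k * (T ^^ k) f z)) < \<epsilon>)"

definition comp_op :: "(complex \<Rightarrow> complex) \<Rightarrow> (complex \<Rightarrow> complex) \<Rightarrow> (complex \<Rightarrow> complex)" where
  "comp_op \<psi> f = f \<circ> \<psi>"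

definition psi :: "complex \<Rightarrow> complex \<Rightarrow> complex" where
  "psi s z = s * z / (1 - (1 - s) * z)"

end

theory Submission
  imports Defs
begin

text \<open>
  The self-map hypothesis forces \<open>s\<close> to be a real number \<open>t \<in> (0, 1)\<close>. In the coordinate
  \<open>v = z / (1 - z)\<close> the map \<open>psi t\<close> becomes the dilation \<open>v \<mapsto> t v\<close>. Subtracting from
  \<open>f \<in> A\<^sup>2\<^sub>\<beta>\<close>, written in this coordinate, its Taylor polynomial of degree \<open>< K\<close> at \<open>v = 0\<close>
  leaves a remainder \<open>R\<close> which, by the pointwise bound for \<open>A\<^sup>2\<^sub>\<beta>\<close>, is \<open>O(v\<^sup>K)\<close> at \<open>0\<close> and
  \<open>O(v\<^sup>K\<^sup>-\<^sup>1)\<close> at \<open>\<infinity>\<close> once \<open>K\<close> is large. Hence, for \<open>c = \<surd>t / t\<^sup>K\<close>, the sums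
  \<open>\<Lambda>\<^sub>\<tau> f = \<Sum>k\<in>\<int>. c\<^sup>k R(\<tau> t\<^sup>k)\<close> are bounded linear functionals, and shifting \<open>k\<close> gives
  \<open>\<Lambda>\<^sub>\<tau> (f \<circ> psi t) = \<Lambda>\<^sub>t\<^sub>\<tau> f = c\<^sup>-\<^sup>1 \<Lambda>\<^sub>\<tau> f\<close>: they are eigenvectors of the adjoint of the
  composition operator, all for the same eigenvalue. Two of them, \<open>\<Lambda>\<^sub>1\<close> and \<open>\<Lambda>\<^sub>\<surd>\<^sub>t\<close>, are linearly
  independent, as polynomials \<open>z\<^sup>M (1 - z)\<^sup>M\<close> with large \<open>M\<close> show. For any \<open>f\<close> some nonzero
  combination of them annihilates the whole orbit of \<open>f\<close>, so the orbit cannot span a dense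
  subspace. That the composition operator maps \<open>A\<^sup>2\<^sub>\<beta>\<close> into itself is a Schur test: the
  Taylor coefficient matrix of \<open>psi t\<close> is lower triangular and nonnegative, with row and column
  sums at most \<open>1\<close>, and the weights decrease.
\<close>

section \<open>The weighted Bergman space\<close>

lemma bergman_weight_pos:
  assumes "\<beta> > -1"
  shows "bergman_weight \<beta> n > 0"
  using assms by (simp add: bergman_weight_def Gamma_real_pos)

lemma bergman_weight_eq_pochhammer:
  assumes "\<beta> > -1"
  shows "bergman_weight \<beta> n = fact n / pochhammer (2 + \<beta>) n"
proof -
  have "2 + \<beta> \<notin> \<int>\<^sub>\<le>\<^sub>0"
    using assms nonpos_Ints_nonpos by force
  then have poch: "pochhammer (2 + \<beta>) n = Gamma (real n + 2 + \<beta>) / Gamma (2 + \<beta>)"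
    using pochhammer_Gamma[of "2 + \<beta>" n] by (simp add: add_ac)
  have "Gamma (2 + \<beta>) > 0" "Gamma (real n + 2 + \<beta>) > 0"
    using assms by (auto intro: Gamma_real_pos)
  then show ?thesis
    unfolding bergman_weight_def poch by (simp add: field_simps)
qed

lemma decseq_bergman_weight:
  assumes "\<beta> > -1"
  shows "decseq (bergman_weight \<beta>)"
proof (rule decseq_SucI)
  fix n
  have "pochhammer (2 + \<beta>) n > 0"
    using assms by (intro pochhammer_pos) auto
  then have "bergman_weight \<beta> (Suc n) = bergman_weight \<beta> n * ((n + 1) / (2 + \<beta> + n))"
    using assms by (simp add: bergman_weight_eq_pochhammer pochhammer_Suc field_simps)
  also have "\<dots> \<le> bergman_weight \<beta> n"
    using bergman_weight_pos[OF assms, of n] assms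
    by (intro mult_left_le) (auto simp: field_simps)
  finally show "bergman_weight \<beta> (Suc n) \<le> bergman_weight \<beta> n" .
qed

lemma power_div_bergman_weight_sums:
  assumes "\<beta> > -1" "0 \<le> x" "x < 1"
  shows "(\<lambda>n. x ^ n / bergman_weight \<beta> n) sums ((1 - x) powr (-(2 + \<beta>)))"
proof -
  have "((-(2 + \<beta>)) gchoose n) * (-x) ^ n = x ^ n / bergman_weight \<beta> n" for n
  proof -
    have "pochhammer (2 + \<beta>) n > 0"
      using assms by (intro pochhammer_pos) auto
    moreover have "((-1::real) ^ n * (-1) ^ n) = 1"
      by (simp flip: power_mult_distrib)
    ultimately show ?thesis
      by (simp add: gbinomial_pochhammer power_minus[of x] add.commute
          bergman_weight_eq_pochhammer[OF assms(1)] field_simps)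
  qed
  moreover have "(\<lambda>n. ((-(2 + \<beta>)) gchoose n) * (-x) ^ n) sums (1 + (-x)) powr (-(2 + \<beta>))"
    using assms by (intro gen_binomial_real) auto
  ultimately show ?thesis
    by simp
qed

lemma A2_coeff_summable:
  "h \<in> A2 \<beta> \<Longrightarrow> summable (\<lambda>n. bergman_weight \<beta> n * (cmod (taylor_coeff h n))\<^sup>2)"
  by (simp add: A2_def)

lemma A2_holomorphic: "h \<in> A2 \<beta> \<Longrightarrow> h holomorphic_on ball 0 1"
  by (simp add: A2_def)

lemma A2_coeff_suminf_nonneg:
  assumes "\<beta> > -1" "h \<in> A2 \<beta>"
  shows "(\<Sum>n. bergman_weight \<beta> n * (cmod (taylor_coeff h n))\<^sup>2) \<ge> 0"
  using A2_coeff_summable[OF assms(2)] bergman_weight_pos[OF assms(1)]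
  by (intro suminf_nonneg) (auto simp: less_imp_le)

lemma A2_norm_nonneg:
  assumes "\<beta> > -1" "h \<in> A2 \<beta>"
  shows "A2_norm \<beta> h \<ge> 0"
  using A2_coeff_suminf_nonneg[OF assms] by (simp add: A2_norm_def)

lemma A2_norm_power2:
  assumes "\<beta> > -1" "h \<in> A2 \<beta>"
  shows "(A2_norm \<beta> h)\<^sup>2 = (\<Sum>n. bergman_weight \<beta> n * (cmod (taylor_coeff h n))\<^sup>2)"
  using A2_coeff_suminf_nonneg[OF assms] by (simp add: A2_norm_def)

lemma A2_coeff_sum_le_norm_power2:
  assumes "\<beta> > -1" "h \<in> A2 \<beta>"
  shows "(\<Sum>n\<in>I. bergman_weight \<beta> n * (cmod (taylor_coeff h n))\<^sup>2) \<le> (A2_norm \<beta> h)\<^sup>2"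
proof (cases "finite I")
  case True
  then show ?thesis
    unfolding A2_norm_power2[OF assms] using bergman_weight_pos[OF assms(1)]
    by (intro sum_le_suminf[OF A2_coeff_summable[OF assms(2)]]) (auto simp: less_imp_le)
qed simp

lemma taylor_coeff_sums:
  assumes "h holomorphic_on ball 0 r" "cmod z < r"
  shows "(\<lambda>n. taylor_coeff h n * z ^ n) sums h z"
  using holomorphic_power_series[OF assms(1), of z] assms(2) by (simp add: taylor_coeff_def)

text \<open>Cauchy--Schwarz against the reproducing kernel \<open>\<Sum>n. x^n / bergman_weight \<beta> n\<close>.\<close>
lemma A2_taylor_partial_sum_bound:
  assumes "\<beta> > -1" "h \<in> A2 \<beta>" "cmod z < 1"
  shows "cmod (\<Sum>n<N. taylor_coeff h n * z ^ n) \<le> A2_norm \<beta> h * sqrt ((1 - (cmod z)\<^sup>2) powr (-(2 + \<beta>)))"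
proof -
  define w where "w = bergman_weight \<beta>"
  define a where "a n = sqrt (w n) * cmod (taylor_coeff h n)" for n
  define b where "b n = cmod z ^ n / sqrt (w n)" for n
  have w: "w n > 0" for n
    using bergman_weight_pos[OF assms(1)] by (simp add: w_def)
  have x: "0 \<le> (cmod z)\<^sup>2" "(cmod z)\<^sup>2 < 1"
    using assms(3) by (auto simp: power_less_one_iff abs_square_less_1)
  have "a n * b n = cmod (taylor_coeff h n * z ^ n)" for n
    using w[of n] by (simp add: a_def b_def norm_mult norm_power)
  then have "cmod (\<Sum>n<N. taylor_coeff h n * z ^ n) \<le> (\<Sum>n<N. a n * b n)"
    by (simp add: norm_sum)
  also have "\<dots> \<le> sqrt (\<Sum>n<N. (a n)\<^sup>2) * sqrt (\<Sum>n<N. (b n)\<^sup>2)"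
    using real_sqrt_le_mono[OF Cauchy_Schwarz_ineq_sum[of a b "{..<N}"]]
    by (simp add: real_sqrt_mult)
  also have "\<dots> \<le> A2_norm \<beta> h * sqrt ((1 - (cmod z)\<^sup>2) powr (-(2 + \<beta>)))"
  proof (intro mult_mono)
    have "(\<Sum>n<N. (a n)\<^sup>2) \<le> (A2_norm \<beta> h)\<^sup>2"
      using A2_coeff_sum_le_norm_power2[OF assms(1,2), of "{..<N}"] w
      by (simp add: a_def w_def power_mult_distrib less_imp_le)
    then show "sqrt (\<Sum>n<N. (a n)\<^sup>2) \<le> A2_norm \<beta> h"
      using A2_norm_nonneg[OF assms(1,2)] real_le_lsqrt by fastforce
    have "(\<Sum>n<N. (b n)\<^sup>2) = (\<Sum>n<N. ((cmod z)\<^sup>2) ^ n / w n)"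
      using w by (simp add: b_def power_divide less_imp_le power_mult[symmetric] mult.commute)
    also have "\<dots> \<le> (1 - (cmod z)\<^sup>2) powr (-(2 + \<beta>))"
      using power_div_bergman_weight_sums[OF assms(1) x] w x
      by (intro sum_le_suminf[of _ "{..<N}", THEN order_trans])
        (auto simp: sums_iff w_def intro!: divide_nonneg_pos)
    finally show "sqrt (\<Sum>n<N. (b n)\<^sup>2) \<le> sqrt ((1 - (cmod z)\<^sup>2) powr (-(2 + \<beta>)))"
      by (rule real_sqrt_le_mono)
  qed (use A2_norm_nonneg[OF assms(1,2)] in \<open>auto intro: sum_nonneg\<close>)
  finally show ?thesis .
qed

lemma A2_pointwise_bound:
  assumes "\<beta> > -1" "h \<in> A2 \<beta>" "cmod z < 1"
  shows "cmod (h z) \<le> A2_norm \<beta> h * sqrt ((1 - (cmod z)\<^sup>2) powr (-(2 + \<beta>)))"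
proof -
  have "(\<lambda>N. cmod (\<Sum>n<N. taylor_coeff h n * z ^ n)) \<longlonglongrightarrow> cmod (h z)"
    using taylor_coeff_sums[OF A2_holomorphic[OF assms(2)] assms(3)]
    by (intro tendsto_norm) (simp add: sums_def)
  then show ?thesis
    by (rule LIMSEQ_le_const2) (use A2_taylor_partial_sum_bound[OF assms] in auto)
qed

lemma taylor_coeff_diff_cmult:
  assumes "F holomorphic_on ball 0 r" "G holomorphic_on ball 0 r" "r > 0"
  shows "taylor_coeff (\<lambda>z. F z - a * G z) n = taylor_coeff F n - a * taylor_coeff G n"
proof -
  have "(\<lambda>z. a * G z) holomorphic_on ball 0 r"
    using assms by (intro holomorphic_intros)
  then have "(deriv ^^ n) (\<lambda>z. F z - a * G z) 0 = (deriv ^^ n) F 0 - (deriv ^^ n) (\<lambda>z. a * G z) 0"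
    using assms by (intro higher_deriv_diff) auto
  also have "(deriv ^^ n) (\<lambda>z. a * G z) 0 = a * (deriv ^^ n) G 0"
    using assms by (intro higher_deriv_cmult) auto
  finally show ?thesis
    by (simp add: taylor_coeff_def diff_divide_distrib)
qed

lemma norm_diff_mult_power2_le:
  fixes x y a :: "'a::real_normed_field"
  shows "(norm (x - a * y))\<^sup>2 \<le> 2 * (norm x)\<^sup>2 + 2 * (norm a)\<^sup>2 * (norm y)\<^sup>2"
proof -
  have "(norm (x - a * y))\<^sup>2 \<le> (norm x + norm a * norm y)\<^sup>2"
    using norm_triangle_ineq4[of x "a * y"] by (intro power_mono) (auto simp: norm_mult)
  also have "\<dots> \<le> 2 * (norm x)\<^sup>2 + 2 * (norm a)\<^sup>2 * (norm y)\<^sup>2"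
    using sum_squares_ge_zero[of "norm x - norm a * norm y" 0]
    by (simp add: power2_eq_square algebra_simps)
  finally show ?thesis .
qed

lemma A2_diff_cmult:
  assumes "\<beta> > -1" "F \<in> A2 \<beta>" "G \<in> A2 \<beta>"
  shows "(\<lambda>z. F z - a * G z) \<in> A2 \<beta>"
proof -
  define w where "w = bergman_weight \<beta>"
  have hol: "F holomorphic_on ball 0 1" "G holomorphic_on ball 0 1"
    using assms by (auto simp: A2_def)
  have "norm (w n * (cmod (taylor_coeff (\<lambda>z. F z - a * G z) n))\<^sup>2)
      \<le> 2 * (w n * (cmod (taylor_coeff F n))\<^sup>2) + 2 * (cmod a)\<^sup>2 * (w n * (cmod (taylor_coeff G n))\<^sup>2)" for n
    using bergman_weight_pos[OF assms(1), of n]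
      mult_left_mono[OF norm_diff_mult_power2_le[of "taylor_coeff F n" a "taylor_coeff G n"], of "w n"]
    by (simp add: taylor_coeff_diff_cmult[OF hol] w_def algebra_simps)
  moreover have "summable (\<lambda>n. 2 * (w n * (cmod (taylor_coeff F n))\<^sup>2)
      + 2 * (cmod a)\<^sup>2 * (w n * (cmod (taylor_coeff G n))\<^sup>2))"
    using A2_coeff_summable[OF assms(2)] A2_coeff_summable[OF assms(3)]
    unfolding w_def by (intro summable_add summable_mult)
  ultimately have "summable (\<lambda>n. w n * (cmod (taylor_coeff (\<lambda>z. F z - a * G z) n))\<^sup>2)"
    by (rule summable_comparison_test'[rotated])
  moreover have "(\<lambda>z. F z - a * G z) holomorphic_on ball 0 1"
    using hol by (intro holomorphic_intros)
  ultimately show ?thesis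
    by (simp add: A2_def w_def)
qed

lemma A2_if_finite_support:
  assumes "f holomorphic_on ball 0 1" "finite {n. taylor_coeff f n \<noteq> 0}"
  shows "f \<in> A2 \<beta>"
proof -
  have "summable (\<lambda>n. bergman_weight \<beta> n * (cmod (taylor_coeff f n))\<^sup>2)"
    by (rule summable_finite[OF assms(2)]) auto
  then show ?thesis
    using assms(1) by (simp add: A2_def)
qed

section \<open>A criterion for non-cyclicity\<close>

lemma A2_orbit_combination:
  assumes "\<beta> > -1" and maps: "\<And>h. h \<in> A2 \<beta> \<Longrightarrow> T h \<in> A2 \<beta>"
    and "f \<in> A2 \<beta>" "g \<in> A2 \<beta>"
    and linear: "\<And>F G a. F \<in> A2 \<beta> \<Longrightarrow> G \<in> A2 \<beta> \<Longrightarrow> \<Phi> (\<lambda>z. F z - a * G z) = \<Phi> F - a * \<Phi> G"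
  shows "(\<lambda>z. g z - (\<Sum>k<N. a k * (T ^^ k) f z)) \<in> A2 \<beta>
    \<and> \<Phi> (\<lambda>z. g z - (\<Sum>k<N. a k * (T ^^ k) f z)) = \<Phi> g - (\<Sum>k<N. a k * \<Phi> ((T ^^ k) f))"
proof (induction N)
  case (Suc N)
  define h where "h = (\<lambda>z. g z - (\<Sum>k<N. a k * (T ^^ k) f z))"
  have "(T ^^ N) f \<in> A2 \<beta>"
    using assms(3) by (induction N) (auto intro: maps)
  moreover have "h \<in> A2 \<beta>" "\<Phi> h = \<Phi> g - (\<Sum>k<N. a k * \<Phi> ((T ^^ k) f))"
    using Suc.IH by (simp_all add: h_def)
  moreover have "(\<lambda>z. g z - (\<Sum>k<Suc N. a k * (T ^^ k) f z)) = (\<lambda>z. h z - a N * (T ^^ N) f z)"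
    by (simp add: h_def algebra_simps)
  ultimately show ?case
    using A2_diff_cmult[OF assms(1)] linear by simp
qed (use assms(4) in simp)

lemma A2_orbit_span_not_dense:
  assumes "\<beta> > -1" and maps: "\<And>h. h \<in> A2 \<beta> \<Longrightarrow> T h \<in> A2 \<beta>"
    and "f \<in> A2 \<beta>" "g \<in> A2 \<beta>"
    and linear: "\<And>F G a. F \<in> A2 \<beta> \<Longrightarrow> G \<in> A2 \<beta> \<Longrightarrow> \<Phi> (\<lambda>z. F z - a * G z) = \<Phi> F - a * \<Phi> G"
    and bounded: "\<And>h. h \<in> A2 \<beta> \<Longrightarrow> cmod (\<Phi> h) \<le> B * A2_norm \<beta> h"
    and annihilates: "\<And>k. \<Phi> ((T ^^ k) f) = 0" and "\<Phi> g \<noteq> 0"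
  shows "A2_norm \<beta> (\<lambda>z. g z - (\<Sum>k<N. a k * (T ^^ k) f z)) \<ge> cmod (\<Phi> g) / (\<bar>B\<bar> + 1)"
proof -
  define h where "h = (\<lambda>z. g z - (\<Sum>k<N. a k * (T ^^ k) f z))"
  have "h \<in> A2 \<beta> \<and> \<Phi> h = \<Phi> g - (\<Sum>k<N. a k * \<Phi> ((T ^^ k) f))"
    unfolding h_def by (rule A2_orbit_combination[where T = T and \<Phi> = \<Phi>, OF assms(1) maps assms(3,4) linear])
  then have "h \<in> A2 \<beta>" "\<Phi> h = \<Phi> g"
    using annihilates by simp_all
  then have "cmod (\<Phi> g) \<le> (\<bar>B\<bar> + 1) * A2_norm \<beta> h"
    using bounded A2_norm_nonneg[OF assms(1)] by (smt (verit) mult_right_mono abs_ge_self)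
  then show ?thesis
    by (simp add: h_def divide_le_eq mult.commute)
qed

lemma exists_annihilating_combination:
  fixes a1 a2 p1 p2 q1 q2 :: complex
  assumes "p1 * q2 - q1 * p2 \<noteq> 0"
  obtains u v where "u * a1 + v * a2 = 0" "u * p1 + v * p2 \<noteq> 0 \<or> u * q1 + v * q2 \<noteq> 0"
proof -
  obtain u v where uv: "u * a1 + v * a2 = 0" "u \<noteq> 0 \<or> v \<noteq> 0"
    by (cases "a1 = 0 \<and> a2 = 0") (auto intro: that[of 1 0] that[of a2 "- a1"] simp: algebra_simps)
  have "u * (p1 * q2 - q1 * p2) = q2 * (u * p1 + v * p2) - p2 * (u * q1 + v * q2)"
    "v * (p1 * q2 - q1 * p2) = p1 * (u * q1 + v * q2) - q1 * (u * p1 + v * p2)"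
    by (simp_all add: algebra_simps)
  then have "u * p1 + v * p2 \<noteq> 0 \<or> u * q1 + v * q2 \<noteq> 0"
    using uv(2) assms by force
  then show thesis
    using that[OF uv(1)] by blast
qed

text \<open>As both functionals are eigenvectors of the adjoint of \<open>T\<close> for the same eigenvalue, some
  nonzero combination of them annihilates the orbit of any given vector, and by their linear
  independence this combination does not vanish on all of \<open>A2 \<beta>\<close>.\<close>
lemma not_cyclic_on_A2_if_eigenfunctionals:
  fixes \<Lambda>1 \<Lambda>2 :: "(complex \<Rightarrow> complex) \<Rightarrow> complex"
  assumes "\<beta> > -1" and maps: "\<And>h. h \<in> A2 \<beta> \<Longrightarrow> T h \<in> A2 \<beta>"
    and linear: "\<And>F G a. F \<in> A2 \<beta> \<Longrightarrow> G \<in> A2 \<beta> \<Longrightarrow> \<Lambda>1 (\<lambda>z. F z - a * G z) = \<Lambda>1 F - a * \<Lambda>1 G"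
      "\<And>F G a. F \<in> A2 \<beta> \<Longrightarrow> G \<in> A2 \<beta> \<Longrightarrow> \<Lambda>2 (\<lambda>z. F z - a * G z) = \<Lambda>2 F - a * \<Lambda>2 G"
    and bounded: "\<And>h. h \<in> A2 \<beta> \<Longrightarrow> cmod (\<Lambda>1 h) \<le> B * A2_norm \<beta> h"
      "\<And>h. h \<in> A2 \<beta> \<Longrightarrow> cmod (\<Lambda>2 h) \<le> B * A2_norm \<beta> h"
    and eigen: "\<And>h. h \<in> A2 \<beta> \<Longrightarrow> \<Lambda>1 (T h) = \<mu> * \<Lambda>1 h" "\<And>h. h \<in> A2 \<beta> \<Longrightarrow> \<Lambda>2 (T h) = \<mu> * \<Lambda>2 h"
    and independent: "F1 \<in> A2 \<beta>" "F2 \<in> A2 \<beta>" "\<Lambda>1 F1 * \<Lambda>2 F2 - \<Lambda>1 F2 * \<Lambda>2 F1 \<noteq> 0"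
  shows "\<not> cyclic_on_A2 \<beta> T"
proof
  assume "cyclic_on_A2 \<beta> T"
  then obtain f where f: "f \<in> A2 \<beta>" and dense: "\<forall>g\<in>A2 \<beta>. \<forall>\<epsilon>>0. \<exists>N a.
      A2_norm \<beta> (\<lambda>z. g z - (\<Sum>k<N. a k * (T ^^ k) f z)) < \<epsilon>"
    unfolding cyclic_on_A2_def by blast
  obtain u v where uv: "u * \<Lambda>1 f + v * \<Lambda>2 f = 0"
    "u * \<Lambda>1 F1 + v * \<Lambda>2 F1 \<noteq> 0 \<or> u * \<Lambda>1 F2 + v * \<Lambda>2 F2 \<noteq> 0"
    using exists_annihilating_combination[OF independent(3)] by blast
  define \<Phi> where "\<Phi> h = u * \<Lambda>1 h + v * \<Lambda>2 h" for h
  have "(T ^^ k) f \<in> A2 \<beta> \<and> \<Lambda>1 ((T ^^ k) f) = \<mu> ^ k * \<Lambda>1 f \<and> \<Lambda>2 ((T ^^ k) f) = \<mu> ^ k * \<Lambda>2 f" for k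
    by (induction k) (auto simp: maps eigen f)
  then have "\<Phi> ((T ^^ k) f) = \<mu> ^ k * (u * \<Lambda>1 f + v * \<Lambda>2 f)" for k
    by (simp add: \<Phi>_def algebra_simps)
  then have annihilates: "\<Phi> ((T ^^ k) f) = 0" for k
    using uv(1) by simp
  obtain g where g: "g \<in> A2 \<beta>" "\<Phi> g \<noteq> 0"
    using uv(2) independent(1,2) unfolding \<Phi>_def by blast
  have \<Phi>_linear: "\<Phi> (\<lambda>z. F z - a * G z) = \<Phi> F - a * \<Phi> G" if "F \<in> A2 \<beta>" "G \<in> A2 \<beta>" for F G a
    unfolding \<Phi>_def linear(1)[OF that] linear(2)[OF that] by (simp add: algebra_simps)
  have \<Phi>_bounded: "cmod (\<Phi> h) \<le> ((cmod u + cmod v) * B) * A2_norm \<beta> h" if "h \<in> A2 \<beta>" for h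
  proof -
    have "cmod (\<Phi> h) \<le> cmod u * cmod (\<Lambda>1 h) + cmod v * cmod (\<Lambda>2 h)"
      using norm_triangle_ineq[of "u * \<Lambda>1 h" "v * \<Lambda>2 h"] by (simp add: \<Phi>_def norm_mult)
    also have "\<dots> \<le> cmod u * (B * A2_norm \<beta> h) + cmod v * (B * A2_norm \<beta> h)"
      using bounded[OF that] by (intro add_mono mult_left_mono) auto
    finally show ?thesis
      by (simp add: algebra_simps)
  qed
  have "A2_norm \<beta> (\<lambda>z. g z - (\<Sum>k<N. a k * (T ^^ k) f z))
      \<ge> cmod (\<Phi> g) / (\<bar>(cmod u + cmod v) * B\<bar> + 1)" for N a
    by (rule A2_orbit_span_not_dense[where T = T and \<Phi> = \<Phi> and B = "(cmod u + cmod v) * B",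
          OF assms(1) maps f g(1) \<Phi>_linear \<Phi>_bounded annihilates g(2)])
  moreover have "cmod (\<Phi> g) / (\<bar>(cmod u + cmod v) * B\<bar> + 1) > 0"
    using g(2) by (simp add: add_pos_nonneg)
  ultimately show False
    using dense g(1) by (meson not_less)
qed

section \<open>The self-maps \<open>psi s\<close>\<close>

lemma norm_le_1_if_pole_free:
  assumes "\<forall>z\<in>ball 0 1. 1 - a * z \<noteq> 0"
  shows "cmod a \<le> 1"
proof (rule ccontr)
  assume "\<not> cmod a \<le> 1"
  then have "1 / a \<in> ball 0 1" "1 - a * (1 / a) = 0"
    by (auto simp: norm_divide divide_less_eq)
  then show False
    using assms by blast
qed

text \<open>Testing the self-map condition along the radius on which \<open>1 - (1 - s) z\<close> is real.\<close>
lemma psi_self_map_norm_bound: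
  fixes s :: complex
  assumes "s \<noteq> 1"
    and pole_free: "\<forall>z\<in>ball 0 1. 1 - (1 - s) * z \<noteq> 0"
    and self_map: "\<forall>z\<in>ball 0 1. psi s z \<in> ball 0 1"
  shows "cmod s + cmod (1 - s) \<le> 1"
proof -
  define a where "a = 1 - s"
  have "a \<noteq> 0" "cmod a \<le> 1"
    using assms norm_le_1_if_pole_free[of "1 - s"] by (auto simp: a_def)
  define w where "w = cnj a / cmod a"
  have norm_w: "cmod w = 1"
    using \<open>a \<noteq> 0\<close> by (simp add: w_def norm_divide)
  have aw: "a * w = of_real (cmod a)"
    using \<open>a \<noteq> 0\<close> by (simp add: w_def complex_norm_square[symmetric] power2_eq_square)
  have radial: "r * cmod s < 1 - r * cmod a" if "0 \<le> r" "r < 1" for r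
  proof -
    have "r * cmod a < 1"
      using mult_left_le[OF \<open>cmod a \<le> 1\<close> \<open>0 \<le> r\<close>] \<open>r < 1\<close> by linarith
    have "1 - a * (of_real r * w) = of_real (1 - r * cmod a)"
      by (simp add: mult.left_commute[of a] aw)
    moreover have "of_real r * w \<in> ball 0 1"
      using that by (simp add: norm_mult norm_w)
    ultimately have "cmod (s * (of_real r * w) / of_real (1 - r * cmod a)) < 1"
      using self_map unfolding psi_def a_def[symmetric] by (metis mem_ball_0)
    moreover have "cmod (s * (of_real r * w) / of_real (1 - r * cmod a)) = r * cmod s / (1 - r * cmod a)"
      using \<open>r * cmod a < 1\<close> that by (simp add: norm_divide norm_mult norm_w del: of_real_diff)
    ultimately show ?thesis
      using \<open>r * cmod a < 1\<close> by (simp add: divide_less_eq)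
  qed
  have "cmod s \<le> 1 - cmod a"
  proof (rule tendsto_le[OF trivial_limit_at_left_real])
    show "((\<lambda>r. 1 - r * cmod a) \<longlongrightarrow> 1 - cmod a) (at_left 1)"
      "((\<lambda>r. r * cmod s) \<longlongrightarrow> cmod s) (at_left 1)"
      by (auto intro!: tendsto_eq_intros)
    have "\<forall>\<^sub>F r in at_left (1::real). r \<in> {0<..<1}"
      by (rule eventually_at_left_real) simp
    then show "\<forall>\<^sub>F r in at_left 1. r * cmod s \<le> 1 - r * cmod a"
      by eventually_elim (use radial in \<open>auto intro: less_imp_le\<close>)
  qed
  then show ?thesis
    by (simp add: a_def)
qed

text \<open>Equality in the triangle inequality for \<open>s + (1 - s) = 1\<close>.\<close>
lemma of_real_norm_if_norm_add_norm_one_minus_le_1: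
  fixes s :: complex
  assumes "cmod s + cmod (1 - s) \<le> 1"
  shows "s = of_real (cmod s)"
proof -
  have "cmod (s + (1 - s)) = cmod s + cmod (1 - s)"
    using assms norm_triangle_ineq[of s "1 - s"] by simp
  then have "cmod s *\<^sub>R (1 - s) = cmod (1 - s) *\<^sub>R s"
    by (simp only: norm_triangle_eq)
  then have "of_real (cmod s) = of_real (cmod s + cmod (1 - s)) * s"
    by (simp add: scaleR_conv_of_real algebra_simps)
  then show ?thesis
    using \<open>cmod (s + (1 - s)) = cmod s + cmod (1 - s)\<close> by (simp flip: of_real_add)
qed

lemma psi_self_map_parameter_real:
  fixes s :: complex
  assumes "0 < cmod s" "cmod s < 1"
    and "\<forall>z\<in>ball 0 1. 1 - (1 - s) * z \<noteq> 0" "\<forall>z\<in>ball 0 1. psi s z \<in> ball 0 1"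
  obtains t :: real where "s = of_real t" "0 < t" "t < 1"
proof
  have "s \<noteq> 1"
    using assms(2) by auto
  then show "s = of_real (cmod s)"
    using of_real_norm_if_norm_add_norm_one_minus_le_1 psi_self_map_norm_bound assms(3,4) by blast
qed (use assms(1,2) in auto)

lemma norm_one_minus_of_real: "t \<le> 1 \<Longrightarrow> cmod (1 - complex_of_real t) = 1 - t"
  by (metis abs_of_nonneg diff_ge_0_iff_ge norm_of_real of_real_1 of_real_diff)

lemma psi_denominator_nonzero:
  assumes "0 < t" "t < 1" "cmod z < 1 / (1 - t)"
  shows "1 - (1 - of_real t) * z \<noteq> 0"
proof -
  have "cmod ((1 - of_real t) * z) = (1 - t) * cmod z"
    using assms by (simp add: norm_mult norm_one_minus_of_real)
  also have "\<dots> < 1"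
    using assms by (simp add: field_simps)
  finally show ?thesis
    by auto
qed

lemma psi_holomorphic:
  assumes "0 < t" "t < 1"
  shows "psi (of_real t) holomorphic_on ball 0 (1 / (1 - t))"
  unfolding psi_def using psi_denominator_nonzero[OF assms] by (intro holomorphic_intros) auto

lemma psi_maps_disc:
  assumes "0 < t" "t < 1" "cmod z < 1"
  shows "cmod (psi (of_real t) z) < 1"
proof -
  have "cmod ((1 - of_real t) * z) = (1 - t) * cmod z"
    using assms by (simp add: norm_mult norm_one_minus_of_real)
  then have "1 - (1 - t) * cmod z \<le> cmod (1 - (1 - of_real t) * z)"
    using norm_triangle_ineq2[of 1 "(1 - of_real t) * z"] by simp
  moreover have "t * cmod z < 1 - (1 - t) * cmod z"
    using assms by (simp add: algebra_simps)
  ultimately show ?thesis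
    using assms by (simp add: psi_def norm_divide norm_mult divide_less_eq)
qed

lemma psi_one: "t \<noteq> 0 \<Longrightarrow> psi (of_real t) 1 = 1"
  by (simp add: psi_def)

lemma holomorphic_on_compose_psi:
  assumes "0 < t" "t < 1" "f holomorphic_on ball 0 1"
  shows "(f \<circ> psi (of_real t)) holomorphic_on ball 0 1"
proof (rule holomorphic_on_compose_gen[OF _ assms(3)])
  have "ball 0 1 \<subseteq> ball (0::complex) (1 / (1 - t))"
    using assms by (intro subset_ball) (simp add: field_simps)
  then show "psi (of_real t) holomorphic_on ball 0 1"
    using psi_holomorphic[OF assms(1,2)] by (rule holomorphic_on_subset[rotated])
  show "psi (of_real t) ` ball 0 1 \<subseteq> ball 0 1"
    using psi_maps_disc[OF assms(1,2)] by auto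
qed

section \<open>Composition with \<open>psi t\<close> preserves \<open>A2 \<beta>\<close>\<close>

lemma power2_sum_le_sum_mult_power2:
  fixes p a :: "'a \<Rightarrow> real"
  assumes "\<And>i. i \<in> A \<Longrightarrow> p i \<ge> 0" "sum p A \<le> 1"
  shows "(\<Sum>i\<in>A. p i * a i)\<^sup>2 \<le> (\<Sum>i\<in>A. p i * (a i)\<^sup>2)"
proof -
  have "(\<Sum>i\<in>A. p i * a i) = (\<Sum>i\<in>A. sqrt (p i) * (sqrt (p i) * a i))"
    using assms(1) by (intro sum.cong) (simp_all add: mult.assoc[symmetric])
  also have "\<dots>\<^sup>2 \<le> (\<Sum>i\<in>A. (sqrt (p i))\<^sup>2) * (\<Sum>i\<in>A. (sqrt (p i) * a i)\<^sup>2)"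
    by (rule Cauchy_Schwarz_ineq_sum)
  also have "\<dots> = sum p A * (\<Sum>i\<in>A. p i * (a i)\<^sup>2)"
    using assms(1) by (simp add: power_mult_distrib)
  also have "\<dots> \<le> (\<Sum>i\<in>A. p i * (a i)\<^sup>2)"
    using assms by (intro mult_left_le_one_le sum_nonneg) (auto intro: sum_nonneg)
  finally show ?thesis .
qed

lemma schur_test_lower_triangular:
  fixes p :: "nat \<Rightarrow> nat \<Rightarrow> real" and a b w :: "nat \<Rightarrow> real"
  assumes p_nonneg: "\<And>n i. p n i \<ge> 0"
    and p_lower: "\<And>n i. n < i \<Longrightarrow> p n i = 0"
    and row_sum: "\<And>n. (\<Sum>i\<le>n. p n i) \<le> 1"
    and column_sum: "\<And>N i. (\<Sum>n<N. p n i) \<le> 1"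
    and w_nonneg: "\<And>n. w n \<ge> 0" and w_dec: "decseq w"
    and b_nonneg: "\<And>n. b n \<ge> 0" and b_le: "\<And>n. b n \<le> (\<Sum>i\<le>n. p n i * a i)"
  shows "(\<Sum>n<N. w n * (b n)\<^sup>2) \<le> (\<Sum>i<N. w i * (a i)\<^sup>2)"
proof -
  have b_square: "(b n)\<^sup>2 \<le> (\<Sum>i<N. p n i * (a i)\<^sup>2)" if "n < N" for n
  proof -
    have "(b n)\<^sup>2 \<le> (\<Sum>i\<le>n. p n i * a i)\<^sup>2"
      using b_le[of n] b_nonneg[of n] by (rule power_mono)
    also have "\<dots> \<le> (\<Sum>i\<le>n. p n i * (a i)\<^sup>2)"
      using p_nonneg row_sum by (rule power2_sum_le_sum_mult_power2)
    also have "\<dots> = (\<Sum>i<N. p n i * (a i)\<^sup>2)"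
      using that p_lower by (intro sum.mono_neutral_left) auto
    finally show ?thesis .
  qed
  have "(\<Sum>n<N. w n * (b n)\<^sup>2) \<le> (\<Sum>n<N. w n * (\<Sum>i<N. p n i * (a i)\<^sup>2))"
    using b_square w_nonneg by (intro sum_mono mult_left_mono) auto
  also have "\<dots> = (\<Sum>n<N. \<Sum>i<N. w n * p n i * (a i)\<^sup>2)"
    by (simp add: sum_distrib_left mult.assoc)
  also have "\<dots> = (\<Sum>i<N. \<Sum>n<N. w n * p n i * (a i)\<^sup>2)"
    by (rule sum.swap)
  also have "\<dots> \<le> (\<Sum>i<N. w i * (a i)\<^sup>2 * (\<Sum>n<N. p n i))"
  proof (intro sum_mono, unfold sum_distrib_left, intro sum_mono)
    fix i n
    have "w n * p n i \<le> w i * p n i"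
      using p_lower[of n i] p_nonneg[of n i] decseqD[OF w_dec, of i n]
      by (cases "n < i") (auto intro: mult_right_mono)
    then show "w n * p n i * (a i)\<^sup>2 \<le> w i * (a i)\<^sup>2 * p n i"
      by (metis mult.commute mult.left_commute mult_right_mono zero_le_power2)
  qed
  also have "\<dots> \<le> (\<Sum>i<N. w i * (a i)\<^sup>2)"
    using column_sum w_nonneg by (intro sum_mono mult_left_le) auto
  finally show ?thesis .
qed

lemma fps_inverse_one_minus_const_X:
  "inverse (1 - fps_const (c::complex) * fps_X) = Abs_fps (\<lambda>n. c ^ n)"
proof (rule fps_inverse_unique)
  show "(1 - fps_const c * fps_X) * Abs_fps (\<lambda>n. c ^ n) = 1"
    by (rule fps_ext) (case_tac n, simp_all add: ring_distribs mult.assoc)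
qed

lemma sum_in_nonneg_Reals:
  "(\<And>i. i \<in> A \<Longrightarrow> f i \<in> \<real>\<^sub>\<ge>\<^sub>0) \<Longrightarrow> sum f A \<in> \<real>\<^sub>\<ge>\<^sub>0"
  by (induction A rule: infinite_finite_induct) auto

lemma geometric_has_fps_expansion:
  "(\<lambda>z. inverse (1 - c * z)) has_fps_expansion Abs_fps (\<lambda>n. (c::complex) ^ n)"
proof -
  have "(\<lambda>z. 1 - c * z) has_fps_expansion 1 - fps_const c * fps_X"
    by (intro has_fps_expansion_diff has_fps_expansion_1 has_fps_expansion_cmult_left
        has_fps_expansion_fps_X)
  then show ?thesis
    using has_fps_expansion_inverse[of "\<lambda>z. 1 - c * z" "1 - fps_const c * fps_X"]
    by (simp add: fps_inverse_one_minus_const_X)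
qed

lemma linear_fractional_has_fps_expansion:
  "(\<lambda>z. c * z * inverse (1 - d * z)) has_fps_expansion fps_const c * fps_X * Abs_fps (\<lambda>n. (d::complex) ^ n)"
  by (rule has_fps_expansion_mult[OF has_fps_expansion_cmult_left[OF has_fps_expansion_fps_X]
        geometric_has_fps_expansion])

definition psi_fps :: "real \<Rightarrow> complex fps" where
  "psi_fps t = fps_const (of_real t) * fps_X * Abs_fps (\<lambda>n. (1 - of_real t) ^ n)"

lemma psi_fps_nth: "psi_fps t $ n = (if n = 0 then 0 else of_real t * (1 - of_real t) ^ (n - 1))"
  by (simp add: psi_fps_def mult.assoc)

lemma psi_has_fps_expansion:
  assumes "0 < t" "t < 1"
  shows "psi (of_real t) has_fps_expansion psi_fps t"
proof -
  have "psi (of_real t) = (\<lambda>z. of_real t * z * inverse (1 - (1 - of_real t) * z))"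
    by (simp add: fun_eq_iff psi_def divide_inverse)
  then show ?thesis
    using linear_fractional_has_fps_expansion[of "of_real t" "1 - of_real t"]
    by (simp add: psi_fps_def)
qed

lemma psi_fps_power_nth_nonneg:
  assumes "0 \<le> t" "t \<le> 1"
  shows "(psi_fps t ^ i) $ n \<in> \<real>\<^sub>\<ge>\<^sub>0"
proof (induction i arbitrary: n)
  case (Suc i)
  have "psi_fps t $ k = of_real (if k = 0 then 0 else t * (1 - t) ^ (k - 1))" for k
    by (simp add: psi_fps_nth)
  then have "psi_fps t $ k \<in> \<real>\<^sub>\<ge>\<^sub>0" for k
    using assms by simp
  then show ?case
    using Suc by (simp add: fps_mult_nth sum_in_nonneg_Reals)
qed simp

lemma psi_fps_power_nth_eq_0: "n < i \<Longrightarrow> (psi_fps t ^ i) $ n = 0"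
  using startsby_zero_power_prefix[of "psi_fps t" i] by (simp add: psi_fps_nth)

text \<open>The columns of the matrix \<open>(psi_fps t ^ i) $ n\<close> sum to \<open>psi t 1 ^ i = 1\<close>; this needs
  convergence of the expansion at the boundary point \<open>1\<close>, which holds since \<open>psi t\<close> is
  holomorphic on the larger disc of radius \<open>1 / (1 - t)\<close>.\<close>
lemma psi_fps_power_column_sums:
  assumes "0 < t" "t < 1"
  shows "(\<lambda>n. (psi_fps t ^ i) $ n) sums 1"
proof -
  have "(\<lambda>z. psi (of_real t) z ^ i) has_fps_expansion psi_fps t ^ i"
    by (intro has_fps_expansion_power psi_has_fps_expansion assms)
  moreover have "(\<lambda>z. psi (of_real t) z ^ i) holomorphic_on eball 0 (ereal (1 / (1 - t)))"
    using psi_holomorphic[OF assms] by (auto intro!: holomorphic_intros)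
  moreover have "ereal (cmod (1::complex)) < ereal (1 / (1 - t))"
    using assms by (simp add: field_simps)
  ultimately show ?thesis
    using has_fps_expansion_imp_sums_complex[of _ _ _ 1] psi_one[of t] assms by fastforce
qed

text \<open>The row sums are the coefficients of \<open>1 / (1 - psi t z) = 1 + t z / (1 - z)\<close>.\<close>
lemma psi_fps_power_row_sum:
  assumes "0 < t" "t < 1"
  shows "(\<Sum>i\<le>n. (psi_fps t ^ i) $ n) = (if n = 0 then 1 else of_real t)"
proof -
  have geometric: "(\<lambda>w::complex. inverse (1 - w)) has_fps_expansion Abs_fps (\<lambda>n. 1)"
    using geometric_has_fps_expansion[of 1] by simp
  have "eventually (\<lambda>z. z \<in> ball (0::complex) 1) (nhds 0)"
    by (intro eventually_nhds_in_open) auto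
  then have "eventually (\<lambda>z. ((\<lambda>w. inverse (1 - w)) \<circ> psi (of_real t)) z
      = 1 + of_real t * z * inverse (1 - 1 * z)) (nhds 0)"
  proof (rule eventually_mono)
    fix z :: complex assume "z \<in> ball 0 1"
    then have "cmod z < 1"
      by simp
    moreover have "1 \<le> 1 / (1 - t)"
      using assms by (simp add: field_simps)
    ultimately have "1 - (1 - of_real t) * z \<noteq> 0" "1 - z \<noteq> 0"
      using psi_denominator_nonzero[OF assms, of z] by auto
    then show "((\<lambda>w. inverse (1 - w)) \<circ> psi (of_real t)) z = 1 + of_real t * z * inverse (1 - 1 * z)"
      by (simp add: psi_def field_simps)
  qed
  moreover have "(\<lambda>z::complex. 1 + of_real t * z * inverse (1 - 1 * z)) has_fps_expansion
      1 + fps_const (of_real t) * fps_X * Abs_fps (\<lambda>n. 1 ^ n)"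
    by (rule has_fps_expansion_add[OF has_fps_expansion_1 linear_fractional_has_fps_expansion[of "of_real t" 1]])
  ultimately have "((\<lambda>w. inverse (1 - w)) \<circ> psi (of_real t)) has_fps_expansion
      1 + fps_const (of_real t) * fps_X * Abs_fps (\<lambda>n. 1 ^ n)"
    by (rule has_fps_expansion_cong[THEN iffD2, OF _ refl])
  moreover have "((\<lambda>w. inverse (1 - w)) \<circ> psi (of_real t)) has_fps_expansion
      (Abs_fps (\<lambda>n. 1) oo psi_fps t)"
    by (rule has_fps_expansion_compose[OF geometric psi_has_fps_expansion[OF assms]])
      (simp add: psi_fps_nth)
  ultimately have series: "(Abs_fps (\<lambda>n. 1) oo psi_fps t) = 1 + fps_const (of_real t) * fps_X * Abs_fps (\<lambda>n. 1 ^ n)"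
    by (rule fps_expansion_unique_complex[rotated])
  have "(\<Sum>i\<le>n. (psi_fps t ^ i) $ n) = (Abs_fps (\<lambda>n. 1) oo psi_fps t) $ n"
    by (simp add: fps_compose_nth atLeast0AtMost)
  also have "\<dots> = (if n = 0 then 1 else of_real t)"
    unfolding series by (cases n) (simp_all add: mult.assoc)
  finally show ?thesis .
qed

lemma holomorphic_has_fps_expansion_taylor:
  assumes "f holomorphic_on ball 0 r" "r > 0"
  shows "f has_fps_expansion Abs_fps (taylor_coeff f)"
proof -
  have "f analytic_on ball 0 r"
    using assms(1) by (simp add: analytic_on_open)
  then have "f analytic_on {0}"
    by (rule analytic_on_subset) (simp add: assms(2))
  then have "f has_fps_expansion fps_expansion f 0"
    by (rule analytic_at_imp_has_fps_expansion_0)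
  moreover have "fps_expansion f 0 = Abs_fps (taylor_coeff f)"
    unfolding fps_expansion_def by (rule arg_cong[where f = Abs_fps]) (simp add: fun_eq_iff taylor_coeff_def)
  ultimately show ?thesis
    by simp
qed

lemma taylor_coeff_compose_psi:
  assumes "0 < t" "t < 1" "f holomorphic_on ball 0 1"
  shows "taylor_coeff (f \<circ> psi (of_real t)) n = (\<Sum>i\<le>n. taylor_coeff f i * (psi_fps t ^ i) $ n)"
proof -
  have "(f \<circ> psi (of_real t)) has_fps_expansion (Abs_fps (taylor_coeff f) oo psi_fps t)"
    using holomorphic_has_fps_expansion_taylor[OF assms(3)]
    by (intro has_fps_expansion_compose psi_has_fps_expansion assms) (auto simp: psi_fps_nth)
  then show ?thesis
    using fps_nth_fps_expansion
    by (fastforce simp: taylor_coeff_def fps_compose_nth atLeast0AtMost)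
qed

lemma A2_compose_psi:
  assumes "\<beta> > -1" "0 < t" "t < 1" "f \<in> A2 \<beta>"
  shows "f \<circ> psi (of_real t) \<in> A2 \<beta>"
proof -
  define p where "p n i = Re ((psi_fps t ^ i) $ n)" for n i
  have p_eq: "(psi_fps t ^ i) $ n = of_real (p n i)" and p_nonneg: "p n i \<ge> 0" for n i
    using psi_fps_power_nth_nonneg[of t i n] assms
    by (auto simp: p_def complex_nonneg_Reals_iff complex_eq_iff)
  have hol: "f holomorphic_on ball 0 1"
    using A2_holomorphic[OF assms(4)] .
  have "(\<Sum>n<N. bergman_weight \<beta> n * (cmod (taylor_coeff (f \<circ> psi (of_real t)) n))\<^sup>2)
      \<le> (\<Sum>i<N. bergman_weight \<beta> i * (cmod (taylor_coeff f i))\<^sup>2)" for N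
  proof (rule schur_test_lower_triangular[OF p_nonneg])
    show "p n i = 0" if "n < i" for n i
      using psi_fps_power_nth_eq_0[OF that] by (simp add: p_def)
    show "(\<Sum>i\<le>n. p n i) \<le> 1" for n
      using psi_fps_power_row_sum[OF assms(2,3), of n] assms by (simp add: p_def flip: Re_sum)
    show "(\<Sum>n<N. p n i) \<le> 1" for N i
      using sums_Re[OF psi_fps_power_column_sums[OF assms(2,3), of i]] p_nonneg
      by (intro sum_le_suminf[of _ "{..<N}", THEN order_trans]) (auto simp: p_def sums_iff)
    show "cmod (taylor_coeff (f \<circ> psi (of_real t)) n) \<le> (\<Sum>i\<le>n. p n i * cmod (taylor_coeff f i))" for n
      unfolding taylor_coeff_compose_psi[OF assms(2,3) hol] p_eq
      by (rule order_trans[OF norm_sum]) (simp add: norm_mult p_nonneg mult.commute)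
  qed (use bergman_weight_pos[OF assms(1)] decseq_bergman_weight[OF assms(1)] in \<open>auto intro: less_imp_le\<close>)
  then have "(\<Sum>n<N. bergman_weight \<beta> n * (cmod (taylor_coeff (f \<circ> psi (of_real t)) n))\<^sup>2)
      \<le> (A2_norm \<beta> f)\<^sup>2" for N
    using A2_coeff_sum_le_norm_power2[OF assms(1,4)] order_trans by blast
  then have "summable (\<lambda>n. bergman_weight \<beta> n * (cmod (taylor_coeff (f \<circ> psi (of_real t)) n))\<^sup>2)"
    using bergman_weight_pos[OF assms(1)]
    by (intro summableI_nonneg_bounded[where x = "(A2_norm \<beta> f)\<^sup>2"]) (auto simp: less_imp_le)
  then show ?thesis
    using holomorphic_on_compose_psi[OF assms(2,3) hol] by (simp add: A2_def)
qed

section \<open>The chart in which \<open>psi t\<close> is a dilation\<close>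

text \<open>In the coordinate \<open>v = z / (1 - z)\<close>, i.e.\ \<open>z = v / (1 + v)\<close>, the map \<open>psi t\<close> becomes the
  dilation \<open>v \<mapsto> t v\<close>, and the boundary fixed point \<open>z = 1\<close> moves to \<open>v = \<infinity>\<close>.\<close>
definition chart :: "(complex \<Rightarrow> complex) \<Rightarrow> complex \<Rightarrow> complex" where
  "chart f v = f (v / (1 + v))"

definition chart_remainder :: "nat \<Rightarrow> (complex \<Rightarrow> complex) \<Rightarrow> complex \<Rightarrow> complex" where
  "chart_remainder K f v = chart f v - (\<Sum>m<K. taylor_coeff (chart f) m * v ^ m)"

lemma norm_div_one_plus:
  assumes "cmod v < 1 / 2"
  shows "1 + v \<noteq> 0" "cmod (v / (1 + v)) \<le> cmod v / (1 - cmod v)" "cmod (v / (1 + v)) < 1"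
proof -
  have "1 - cmod v \<le> cmod (1 + v)"
    using norm_triangle_ineq2[of 1 "-v"] by (simp add: norm_minus_commute)
  then have "1 / 2 < cmod (1 + v)" "1 - cmod v \<le> cmod (1 + v)"
    using assms by auto
  then show "1 + v \<noteq> 0" "cmod (v / (1 + v)) \<le> cmod v / (1 - cmod v)" "cmod (v / (1 + v)) < 1"
    using assms by (auto simp: norm_divide frac_le divide_less_eq)
qed

lemma chart_holomorphic:
  assumes "f holomorphic_on ball 0 1"
  shows "chart f holomorphic_on ball 0 (1 / 2)"
proof -
  have "(\<lambda>v. v / (1 + v)) holomorphic_on ball 0 (1 / 2)"
    using norm_div_one_plus(1) by (intro holomorphic_intros) auto
  moreover have "(\<lambda>v::complex. v / (1 + v)) ` ball 0 (1 / 2) \<subseteq> ball 0 1"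
    using norm_div_one_plus(3) by auto
  ultimately have "(f \<circ> (\<lambda>v. v / (1 + v))) holomorphic_on ball 0 (1 / 2)"
    by (rule holomorphic_on_compose_gen[OF _ assms])
  then show ?thesis
    by (simp add: chart_def[abs_def] o_def)
qed

lemma chart_remainder_diff_cmult:
  assumes "F holomorphic_on ball 0 1" "G holomorphic_on ball 0 1"
  shows "chart_remainder K (\<lambda>z. F z - a * G z) v = chart_remainder K F v - a * chart_remainder K G v"
proof -
  have chart_eq: "chart (\<lambda>z. F z - a * G z) = (\<lambda>v. chart F v - a * chart G v)"
    by (simp add: chart_def fun_eq_iff)
  have coeff: "taylor_coeff (\<lambda>v. chart F v - a * chart G v) m
      = taylor_coeff (chart F) m - a * taylor_coeff (chart G) m" for m
    by (rule taylor_coeff_diff_cmult[OF chart_holomorphic[OF assms(1)] chart_holomorphic[OF assms(2)]]) simp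
  show ?thesis
    unfolding chart_remainder_def chart_eq coeff by (simp add: algebra_simps sum_subtractf sum_distrib_left)
qed

lemma chart_compose_psi:
  assumes "1 + v \<noteq> 0" "1 + of_real t * v \<noteq> 0"
  shows "chart (f \<circ> psi (of_real t)) v = chart f (of_real t * v)"
proof -
  have "1 - (1 - of_real t) * (v / (1 + v)) = (1 + of_real t * v) / (1 + v)"
    using assms by (simp add: field_simps)
  then have "psi (of_real t) (v / (1 + v)) = (of_real t * v / (1 + v)) / ((1 + of_real t * v) / (1 + v))"
    by (simp add: psi_def)
  also have "\<dots> = of_real t * v / (1 + of_real t * v)"
    using assms by (simp add: frac_eq_eq)
  finally show ?thesis
    by (simp add: chart_def)
qed

lemma taylor_coeff_chart_compose_psi:
  assumes "0 < t" "t < 1" "f holomorphic_on ball 0 1"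
  shows "taylor_coeff (chart (f \<circ> psi (of_real t))) m = of_real t ^ m * taylor_coeff (chart f) m"
proof -
  have dilation_in_ball: "of_real t * v \<in> ball 0 (1 / 2)" if "v \<in> ball 0 (1 / 2)" for v :: complex
    using that assms mult_left_le_one_le[of "cmod v" t] by (simp add: norm_mult)
  have "eventually (\<lambda>v. v \<in> ball (0::complex) (1 / 2)) (nhds 0)"
    by (intro eventually_nhds_in_open) auto
  then have "eventually (\<lambda>v. chart (f \<circ> psi (of_real t)) v = chart f (of_real t * v)) (nhds 0)"
  proof (rule eventually_mono)
    fix v :: complex
    assume "v \<in> ball 0 (1 / 2)"
    then show "chart (f \<circ> psi (of_real t)) v = chart f (of_real t * v)"
      using norm_div_one_plus(1) dilation_in_ball by (intro chart_compose_psi) auto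
  qed
  then have "(deriv ^^ m) (chart (f \<circ> psi (of_real t))) 0 = (deriv ^^ m) (\<lambda>v. chart f (of_real t * v)) 0"
    by (rule higher_deriv_cong_ev[OF _ refl])
  also have "\<dots> = of_real t ^ m * (deriv ^^ m) (chart f) (of_real t * 0)"
  proof (rule higher_deriv_compose_linear[OF chart_holomorphic[OF assms(3)]])
    show "of_real t * w \<in> ball 0 (1 / 2)" if "w \<in> ball 0 (1 / 2)" for w :: complex
      using dilation_in_ball[OF that] .
  qed auto
  finally show ?thesis
    by (simp add: taylor_coeff_def)
qed

lemma chart_remainder_compose_psi:
  assumes "0 < t" "t < 1" "f holomorphic_on ball 0 1" "x \<ge> 0"
  shows "chart_remainder K (f \<circ> psi (of_real t)) (of_real x) = chart_remainder K f (of_real (t * x))"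
proof -
  have "1 + complex_of_real x \<noteq> 0" "1 + of_real t * complex_of_real x \<noteq> 0"
  proof -
    have "1 + t * x > 0"
      using assms by (simp add: add_pos_nonneg)
    then show "1 + complex_of_real x \<noteq> 0" "1 + of_real t * complex_of_real x \<noteq> 0"
      using assms by (auto simp: complex_eq_iff)
  qed
  then show ?thesis
    using chart_compose_psi
    by (simp add: chart_remainder_def taylor_coeff_chart_compose_psi[OF assms(1-3)]
        power_mult_distrib mult_ac)
qed

text \<open>The factor \<open>(1 - |z|\<^sup>2) powr (-(2 + \<beta>) / 2)\<close> of the pointwise bound at \<open>|z| = 1/3\<close>,
  the largest modulus of \<open>v / (1 + v)\<close> for \<open>|v| \<le> 1/4\<close>.\<close>
definition chart_bound_const :: "real \<Rightarrow> real" where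
  "chart_bound_const \<beta> = sqrt ((8 / 9) powr (-(2 + \<beta>)))"

lemma chart_bound_const_nonneg: "chart_bound_const \<beta> \<ge> 0"
  by (simp add: chart_bound_const_def)

lemma A2_chart_bound:
  assumes "\<beta> > -1" "h \<in> A2 \<beta>" "cmod v \<le> 1 / 4"
  shows "cmod (chart h v) \<le> chart_bound_const \<beta> * A2_norm \<beta> h"
proof -
  define z where "z = v / (1 + v)"
  have "cmod z \<le> cmod v / (1 - cmod v)"
    using norm_div_one_plus(2)[of v] assms(3) by (simp add: z_def)
  also have "\<dots> \<le> (1 / 4) / (1 - 1 / 4)"
    using assms(3) by (intro frac_le) auto
  finally have "cmod z \<le> 1 / 3"
    by simp
  then have "(cmod z)\<^sup>2 \<le> (1 / 3)\<^sup>2"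
    by (intro power_mono) auto
  then have "(1 - (cmod z)\<^sup>2) powr (-(2 + \<beta>)) \<le> (8 / 9) powr (-(2 + \<beta>))"
    using assms(1) by (intro powr_mono2') (auto simp: power2_eq_square)
  then have "sqrt ((1 - (cmod z)\<^sup>2) powr (-(2 + \<beta>))) \<le> chart_bound_const \<beta>"
    unfolding chart_bound_const_def by (rule real_sqrt_le_mono)
  moreover have "cmod z < 1"
    using \<open>cmod z \<le> 1 / 3\<close> by simp
  then have "cmod (h z) \<le> A2_norm \<beta> h * chart_bound_const \<beta>"
    using A2_pointwise_bound[OF assms(1,2), of z] A2_norm_nonneg[OF assms(1,2)]
      mult_left_mono[OF \<open>sqrt _ \<le> chart_bound_const \<beta>\<close>] by (meson order_trans)
  then show ?thesis
    by (simp add: chart_def z_def mult.commute)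
qed

lemma taylor_coeff_chart_bound:
  assumes "\<beta> > -1" "h \<in> A2 \<beta>"
  shows "cmod (taylor_coeff (chart h) m) \<le> chart_bound_const \<beta> * A2_norm \<beta> h * 4 ^ m"
proof -
  have hol: "chart h holomorphic_on ball 0 (1 / 2)"
    by (rule chart_holomorphic[OF A2_holomorphic[OF assms(2)]])
  have "norm ((deriv ^^ m) (chart h) 0) \<le> fact m * (chart_bound_const \<beta> * A2_norm \<beta> h) / (1 / 4) ^ m"
  proof (rule Cauchy_inequality)
    show "chart h holomorphic_on ball 0 (1 / 4)"
      by (rule holomorphic_on_subset[OF hol]) auto
    show "continuous_on (cball 0 (1 / 4)) (chart h)"
      by (rule holomorphic_on_imp_continuous_on[OF holomorphic_on_subset[OF hol]]) auto
  qed (use A2_chart_bound[OF assms] in auto)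
  then show ?thesis
    by (simp add: taylor_coeff_def norm_divide field_simps power_divide)
qed

lemma chart_remainder_bound_near_0:
  assumes "\<beta> > -1" "h \<in> A2 \<beta>" "0 \<le> x" "x \<le> 1 / 8"
  shows "cmod (chart_remainder K h (of_real x)) \<le> 2 * chart_bound_const \<beta> * A2_norm \<beta> h * (4 * x) ^ K"
proof -
  define B where "B = chart_bound_const \<beta> * A2_norm \<beta> h"
  have "B \<ge> 0"
    using A2_norm_nonneg[OF assms(1,2)] chart_bound_const_nonneg by (simp add: B_def)
  define a where "a = (\<lambda>m. taylor_coeff (chart h) m * (of_real x) ^ m)"
  have "a sums chart h (of_real x)"
    using taylor_coeff_sums[OF chart_holomorphic[OF A2_holomorphic[OF assms(2)]], of "of_real x"] assms
    by (simp add: a_def)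
  then have "(\<lambda>i. a (i + K)) sums (chart h (of_real x) - (\<Sum>m<K. a m))"
    by (simp add: sums_iff_shift)
  then have "(\<lambda>i. a (i + K)) sums chart_remainder K h (of_real x)"
    by (simp add: chart_remainder_def a_def)
  moreover have "norm (a (i + K)) \<le> B * (4 * x) ^ K * (4 * x) ^ i" for i
  proof -
    have "norm (a (i + K)) \<le> B * 4 ^ (i + K) * x ^ (i + K)"
      using taylor_coeff_chart_bound[OF assms(1,2), of "i + K"] assms(3)
      by (simp add: a_def norm_mult norm_power B_def mult_right_mono)
    then show ?thesis
      by (simp add: power_add power_mult_distrib mult_ac)
  qed
  moreover have "(\<lambda>i. B * (4 * x) ^ K * (4 * x) ^ i) sums (B * (4 * x) ^ K * (1 / (1 - 4 * x)))"
    using assms by (intro sums_mult geometric_sums) auto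
  ultimately have "cmod (chart_remainder K h (of_real x)) \<le> B * (4 * x) ^ K * (1 / (1 - 4 * x))"
    by (metis norm_suminf_le sums_iff sums_summable)
  also have "\<dots> \<le> B * (4 * x) ^ K * 2"
    using assms \<open>B \<ge> 0\<close> by (intro mult_left_mono) (auto simp: field_simps)
  finally show ?thesis
    by (simp add: B_def mult_ac)
qed

lemma norm_chart_of_real_le:
  assumes "\<beta> > -1" "h \<in> A2 \<beta>" "0 \<le> x"
  shows "cmod (chart h (of_real x)) \<le> A2_norm \<beta> h * (1 + x) powr ((2 + \<beta>) / 2)"
proof -
  define z where "z = x / (1 + x)"
  have "complex_of_real x / (1 + complex_of_real x) = of_real z"
    by (simp add: z_def)
  have z: "0 \<le> z" "z < 1" "1 - z = 1 / (1 + x)"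
    using assms by (auto simp: z_def field_simps)
  have "1 / (1 + x) \<le> 1 - z\<^sup>2"
    using z mult_left_le[of z z] by (simp add: power2_eq_square)
  then have "(1 - z\<^sup>2) powr (-(2 + \<beta>)) \<le> (1 / (1 + x)) powr (-(2 + \<beta>))"
    using assms by (intro powr_mono2') auto
  also have "\<dots> = (1 + x) powr (2 + \<beta>)"
    unfolding powr_minus_divide using assms by (simp add: powr_divide)
  finally have "sqrt ((1 - z\<^sup>2) powr (-(2 + \<beta>))) \<le> sqrt ((1 + x) powr (2 + \<beta>))"
    by (rule real_sqrt_le_mono)
  also have "\<dots> = (1 + x) powr ((2 + \<beta>) / 2)"
    using assms by (simp add: powr_half_sqrt_powr)
  finally have "sqrt ((1 - z\<^sup>2) powr (-(2 + \<beta>))) \<le> (1 + x) powr ((2 + \<beta>) / 2)" .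
  moreover have "cmod (chart h (of_real x)) \<le> A2_norm \<beta> h * sqrt ((1 - z\<^sup>2) powr (-(2 + \<beta>)))"
    using A2_pointwise_bound[OF assms(1,2), of "of_real z"] z
    by (simp add: chart_def \<open>complex_of_real x / (1 + complex_of_real x) = of_real z\<close>)
  ultimately show ?thesis
    using A2_norm_nonneg[OF assms(1,2)] by (meson mult_left_mono order_trans)
qed

lemma norm_chart_taylor_polynomial_le:
  assumes "\<beta> > -1" "h \<in> A2 \<beta>" "0 \<le> x"
  shows "cmod (\<Sum>m<K. taylor_coeff (chart h) m * (of_real x) ^ m)
    \<le> K * (chart_bound_const \<beta> * A2_norm \<beta> h * 4 ^ K * max 1 x ^ (K - 1))"
proof -
  define N C X where "N = A2_norm \<beta> h" and "C = chart_bound_const \<beta>" and "X = max 1 x"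
  have "N \<ge> 0" "C \<ge> 0" "X \<ge> 1"
    using A2_norm_nonneg[OF assms(1,2)] chart_bound_const_nonneg by (auto simp: N_def C_def X_def)
  have term_bound: "cmod (taylor_coeff (chart h) m * (of_real x) ^ m) \<le> C * N * 4 ^ K * X ^ (K - 1)"
    if "m < K" for m
  proof -
    have "cmod (taylor_coeff (chart h) m) \<le> C * N * 4 ^ K"
      using taylor_coeff_chart_bound[OF assms(1,2), of m] mult_left_mono[of "4 ^ m" "4 ^ K" "C * N"]
        power_increasing[of m K 4] that \<open>N \<ge> 0\<close> \<open>C \<ge> 0\<close>
      by (simp add: C_def N_def)
    moreover have "x ^ m \<le> X ^ (K - 1)"
      using that \<open>X \<ge> 1\<close> assms(3)
      by (intro order_trans[OF power_mono power_increasing]) (auto simp: X_def)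
    ultimately show ?thesis
      using assms(3) \<open>N \<ge> 0\<close> \<open>C \<ge> 0\<close> by (simp add: norm_mult norm_power mult_mono')
  qed
  have "cmod (\<Sum>m<K. taylor_coeff (chart h) m * (of_real x) ^ m)
      \<le> (\<Sum>m<K. cmod (taylor_coeff (chart h) m * (of_real x) ^ m))"
    by (rule norm_sum)
  also have "\<dots> \<le> of_nat (card {..<K}) * (C * N * 4 ^ K * X ^ (K - 1))"
    by (rule sum_bounded_above, rule term_bound) simp
  finally show ?thesis
    by (simp add: C_def N_def X_def)
qed

lemma chart_remainder_le_max_power:
  assumes "\<beta> > -1" "h \<in> A2 \<beta>" "0 \<le> x" "1 \<le> K" "2 + \<beta> \<le> 2 * (real K - 1)"
  shows "cmod (chart_remainder K h (of_real x))
    \<le> (2 ^ (K - 1) + chart_bound_const \<beta> * K * 4 ^ K) * A2_norm \<beta> h * max 1 x ^ (K - 1)"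
proof -
  define N X where "N = A2_norm \<beta> h" and "X = max 1 x"
  have "(1 + x) powr ((2 + \<beta>) / 2) \<le> (1 + x) powr (real (K - 1))"
    using assms by (intro powr_mono) auto
  also have "\<dots> = (1 + x) ^ (K - 1)"
    using assms by (intro powr_realpow) auto
  also have "\<dots> \<le> (2 * X) ^ (K - 1)"
    using assms by (intro power_mono) (auto simp: X_def)
  finally have "(1 + x) powr ((2 + \<beta>) / 2) \<le> 2 ^ (K - 1) * X ^ (K - 1)"
    by (simp add: power_mult_distrib)
  from mult_left_mono[OF this A2_norm_nonneg[OF assms(1,2)]]
  have "cmod (chart h (of_real x)) \<le> N * (2 ^ (K - 1) * X ^ (K - 1))"
    using norm_chart_of_real_le[OF assms(1-3)] unfolding N_def by linarith
  then have "cmod (chart_remainder K h (of_real x))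
      \<le> N * (2 ^ (K - 1) * X ^ (K - 1)) + K * (chart_bound_const \<beta> * N * 4 ^ K * X ^ (K - 1))"
    using norm_chart_taylor_polynomial_le[OF assms(1-3), of K] norm_triangle_ineq4
    unfolding chart_remainder_def N_def X_def by (smt (verit))
  then show ?thesis
    by (simp add: N_def X_def algebra_simps)
qed

lemma chart_remainder_le_power_on_unit_interval:
  assumes "\<beta> > -1" "h \<in> A2 \<beta>" "0 \<le> x" "x \<le> 1" "1 \<le> K" "2 + \<beta> \<le> 2 * (real K - 1)"
  shows "cmod (chart_remainder K h (of_real x))
    \<le> (2 ^ (K - 1) + chart_bound_const \<beta> * K * 4 ^ K) * 8 ^ K * A2_norm \<beta> h * x ^ K"
proof -
  define C D N where "C = chart_bound_const \<beta>" and "D = 2 ^ (K - 1) + C * K * 4 ^ K"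
    and "N = A2_norm \<beta> h"
  have "C \<ge> 0" "D > 0" "N \<ge> 0"
    using chart_bound_const_nonneg A2_norm_nonneg[OF assms(1,2)]
    by (auto simp: C_def D_def N_def intro: add_pos_nonneg)
  show ?thesis
  proof (cases "x \<le> 1 / 8")
    case True
    have "(2::real) \<le> 8 ^ K"
      using assms(5) power_increasing[of 1 K "8::real"] by simp
    moreover have "C * 4 ^ K \<le> K * (C * 4 ^ K)"
      using \<open>C \<ge> 0\<close> assms(5) mult_right_mono[of 1 "real K" "C * 4 ^ K"] by simp
    ultimately have "2 * (C * 4 ^ K) \<le> 8 ^ K * (K * (C * 4 ^ K))"
      using \<open>C \<ge> 0\<close> mult_mono by fastforce
    also have "\<dots> \<le> D * 8 ^ K"
      by (simp add: D_def algebra_simps)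
    finally have "2 * C * 4 ^ K * (N * x ^ K) \<le> D * 8 ^ K * (N * x ^ K)"
      using \<open>N \<ge> 0\<close> assms(3) by (intro mult_right_mono) (auto simp: mult.assoc)
    then show ?thesis
      using chart_remainder_bound_near_0[OF assms(1-3) True, of K]
      unfolding C_def D_def N_def by (simp add: power_mult_distrib mult_ac)
  next
    case False
    have "D * N * 1 \<le> D * N * (8 * x) ^ K"
      using False \<open>D > 0\<close> \<open>N \<ge> 0\<close> by (intro mult_left_mono one_le_power) auto
    then show ?thesis
      using chart_remainder_le_max_power[OF assms(1-3,5,6)] assms(4)
      unfolding C_def D_def N_def by (simp add: power_mult_distrib mult_ac)
  qed
qed

lemma chart_remainder_bound:
  assumes "\<beta> > -1" "1 \<le> K" "2 + \<beta> \<le> 2 * (real K - 1)"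
  obtains E where "E > 0"
    and "\<And>h x. h \<in> A2 \<beta> \<Longrightarrow> 0 \<le> x \<Longrightarrow> x \<le> 1 \<Longrightarrow>
      cmod (chart_remainder K h (of_real x)) \<le> E * A2_norm \<beta> h * x ^ K"
    and "\<And>h x. h \<in> A2 \<beta> \<Longrightarrow> 1 \<le> x \<Longrightarrow>
      cmod (chart_remainder K h (of_real x)) \<le> E * A2_norm \<beta> h * x ^ (K - 1)"
proof
  define D where "D = 2 ^ (K - 1) + chart_bound_const \<beta> * K * 4 ^ K"
  have "D > 0"
    using chart_bound_const_nonneg by (auto simp: D_def intro: add_pos_nonneg)
  then show "D * 8 ^ K > 0"
    by simp
  show "cmod (chart_remainder K h (of_real x)) \<le> D * 8 ^ K * A2_norm \<beta> h * x ^ K"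
    if "h \<in> A2 \<beta>" "0 \<le> x" "x \<le> 1" for h x
    using chart_remainder_le_power_on_unit_interval[OF assms(1) that assms(2,3)] by (simp add: D_def)
  show "cmod (chart_remainder K h (of_real x)) \<le> D * 8 ^ K * A2_norm \<beta> h * x ^ (K - 1)"
    if "h \<in> A2 \<beta>" "1 \<le> x" for h x
  proof -
    have "D * A2_norm \<beta> h * x ^ (K - 1) \<le> D * 8 ^ K * A2_norm \<beta> h * x ^ (K - 1)"
      using \<open>D > 0\<close> A2_norm_nonneg[OF assms(1) that(1)] that
      by (intro mult_right_mono) (auto simp: mult_left_le)
    then show ?thesis
      using chart_remainder_le_max_power[OF assms(1) that(1) _ assms(2,3), of x] that
      by (simp add: max_def D_def del: One_nat_def)
  qed
qed

section \<open>Eigenfunctionals of the adjoint\<close>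

locale dilation_eigenfunctional =
  fixes \<beta> :: real and K :: nat and s :: real and E :: real
  assumes beta: "\<beta> > -1" and K_pos: "K \<ge> 1" and s_pos: "0 < s" and s_less_1: "s < 1"
    and E_pos: "E > 0"
    and remainder_near_0: "\<And>h x. h \<in> A2 \<beta> \<Longrightarrow> 0 \<le> x \<Longrightarrow> x \<le> 1 \<Longrightarrow>
      cmod (chart_remainder K h (of_real x)) \<le> E * A2_norm \<beta> h * x ^ K"
    and remainder_near_infinity: "\<And>h x. h \<in> A2 \<beta> \<Longrightarrow> 1 \<le> x \<Longrightarrow>
      cmod (chart_remainder K h (of_real x)) \<le> E * A2_norm \<beta> h * x ^ (K - 1)"
begin

definition c :: real where
  "c = sqrt s / s ^ K"

text \<open>The two series are the parts \<open>k \<ge> 0\<close> and \<open>k < 0\<close> of \<open>\<Sum>k\<in>\<int>. c\<^sup>k R(\<tau> s\<^sup>k)\<close> with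
  \<open>R = chart_remainder K f\<close>. The assumptions on \<open>R\<close> and the choice of \<open>c\<close> make both of them
  dominated by geometric series of ratio \<open>\<surd>s\<close>.\<close>
definition eigenfunctional :: "real \<Rightarrow> (complex \<Rightarrow> complex) \<Rightarrow> complex" where
  "eigenfunctional \<tau> f = (\<Sum>n. of_real (c ^ n) * chart_remainder K f (of_real (\<tau> * s ^ n)))
    + (\<Sum>m. of_real ((1 / c) ^ Suc m) * chart_remainder K f (of_real (\<tau> / s ^ Suc m)))"

lemma c_pos: "c > 0"
  using s_pos by (simp add: c_def)

lemma c_mult_power_s: "c * s ^ K = sqrt s"
  using s_pos by (simp add: c_def)

lemma inverse_c_mult_power_s: "(1 / c) * (1 / s) ^ (K - 1) = sqrt s"
proof -
  have "s ^ K = s * s ^ (K - 1)"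
    using K_pos by (simp add: power_eq_if)
  then have "(1 / c) * (1 / s) ^ (K - 1) = s / sqrt s"
    using s_pos by (simp add: c_def power_divide)
  also have "\<dots> = sqrt s"
    using s_pos by (simp add: real_div_sqrt)
  finally show ?thesis .
qed

lemma sqrt_s: "0 < sqrt s" "sqrt s < 1"
  using s_pos s_less_1 by auto

lemma s_le_sqrt_s: "s \<le> sqrt s"
  using s_pos s_less_1 by (simp add: real_le_rsqrt power2_eq_square mult_left_le)

lemma inverse_c_mult_power_s_le: "(1 / c) * s ^ K \<le> sqrt s"
proof -
  have "s ^ K * s ^ K \<le> s ^ 1"
    using s_pos s_less_1 K_pos power_decreasing[of 1 "2 * K" s] by (simp add: mult_2 flip: power_add)
  then have "(1 / c) * s ^ K \<le> s / sqrt s"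
    using s_pos by (simp add: c_def divide_right_mono)
  then show ?thesis
    using s_pos by (simp add: real_div_sqrt)
qed

lemma forward_term_bound:
  assumes "h \<in> A2 \<beta>" "0 \<le> \<tau>" "\<tau> \<le> 1"
  shows "norm (of_real (c ^ n) * chart_remainder K h (of_real (\<tau> * s ^ n))) \<le> E * A2_norm \<beta> h * sqrt s ^ n"
proof -
  define x where "x = \<tau> * s ^ n"
  have "s ^ n \<le> 1"
    using s_pos s_less_1 by (simp add: power_le_one)
  have x: "0 \<le> x" "x \<le> s ^ n"
    using assms s_pos mult_right_mono[OF assms(3), of "s ^ n"] by (auto simp: x_def)
  have "norm (of_real (c ^ n) * chart_remainder K h (of_real x)) = c ^ n * cmod (chart_remainder K h (of_real x))"
    unfolding norm_mult norm_of_real using c_pos by simp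
  also have "\<dots> \<le> c ^ n * (E * A2_norm \<beta> h * x ^ K)"
    using remainder_near_0[OF assms(1) x(1)] x \<open>s ^ n \<le> 1\<close> c_pos by (intro mult_left_mono) auto
  also have "\<dots> \<le> c ^ n * (E * A2_norm \<beta> h * (s ^ n) ^ K)"
    using x E_pos A2_norm_nonneg[OF beta assms(1)] c_pos by (intro mult_left_mono power_mono) auto
  also have "\<dots> = E * A2_norm \<beta> h * (c * s ^ K) ^ n"
    by (simp add: power_mult_distrib power_mult[symmetric] mult.commute mult.left_commute)
  finally show ?thesis
    by (simp add: x_def c_mult_power_s)
qed

lemma backward_term_bound:
  assumes "h \<in> A2 \<beta>" "s \<le> \<tau>" "\<tau> \<le> 1"
  shows "norm (of_real ((1 / c) ^ Suc m) * chart_remainder K h (of_real (\<tau> / s ^ Suc m)))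
    \<le> E * A2_norm \<beta> h * sqrt s ^ Suc m"
proof -
  define x where "x = \<tau> / s ^ Suc m"
  have "s ^ Suc m \<le> s"
    using s_pos s_less_1 by (simp add: power_le_one mult_left_le)
  then have x: "1 \<le> x" "x \<le> 1 / s ^ Suc m"
    using assms s_pos by (auto simp: x_def le_divide_eq divide_right_mono simp del: power_Suc)
  have "norm (of_real ((1 / c) ^ Suc m) * chart_remainder K h (of_real x))
      = (1 / c) ^ Suc m * cmod (chart_remainder K h (of_real x))"
    unfolding norm_mult norm_of_real using c_pos by (simp del: power_Suc)
  also have "\<dots> \<le> (1 / c) ^ Suc m * (E * A2_norm \<beta> h * x ^ (K - 1))"
    using remainder_near_infinity[OF assms(1) x(1)] c_pos by (intro mult_left_mono) auto
  also have "\<dots> \<le> (1 / c) ^ Suc m * (E * A2_norm \<beta> h * (1 / s ^ Suc m) ^ (K - 1))"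
    using x E_pos A2_norm_nonneg[OF beta assms(1)] c_pos by (intro mult_left_mono power_mono) auto
  also have "\<dots> = E * A2_norm \<beta> h * ((1 / c) * (1 / s) ^ (K - 1)) ^ Suc m"
    by (simp add: power_mult_distrib power_divide mult_ac del: power_Suc flip: power_mult)
  finally show ?thesis
    by (simp only: x_def inverse_c_mult_power_s)
qed

lemma forward_summable:
  assumes "h \<in> A2 \<beta>" "0 \<le> \<tau>" "\<tau> \<le> 1"
  shows "summable (\<lambda>n. of_real (c ^ n) * chart_remainder K h (of_real (\<tau> * s ^ n)))"
proof (rule summable_norm_cancel, rule summable_comparison_test'[where N = 0])
  show "summable (\<lambda>n. E * A2_norm \<beta> h * sqrt s ^ n)"
    using sqrt_s by (intro summable_mult summable_geometric) simp
qed (use forward_term_bound[OF assms] in simp)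

lemma backward_summable:
  assumes "h \<in> A2 \<beta>" "s \<le> \<tau>" "\<tau> \<le> 1"
  shows "summable (\<lambda>m. of_real ((1 / c) ^ Suc m) * chart_remainder K h (of_real (\<tau> / s ^ Suc m)))"
proof (rule summable_norm_cancel, rule summable_comparison_test'[where N = 0])
  show "summable (\<lambda>m. E * A2_norm \<beta> h * sqrt s ^ Suc m)"
    using sqrt_s by (intro summable_mult summable_geometric summable_Suc_iff[THEN iffD2]) simp
qed (use backward_term_bound[OF assms] in simp)

lemma eigenfunctional_bound:
  "\<exists>M. \<forall>h\<in>A2 \<beta>. \<forall>\<tau>. s \<le> \<tau> \<longrightarrow> \<tau> \<le> 1 \<longrightarrow> cmod (eigenfunctional \<tau> h) \<le> M * A2_norm \<beta> h"
proof (intro exI ballI allI impI)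
  fix h \<tau>
  assume h: "h \<in> A2 \<beta>" and \<tau>: "s \<le> \<tau>" "\<tau> \<le> 1"
  define B where "B = E * A2_norm \<beta> h / (1 - sqrt s)"
  have "E * A2_norm \<beta> h \<ge> 0"
    using E_pos A2_norm_nonneg[OF beta h] by simp
  have geometric: "(\<lambda>n. E * A2_norm \<beta> h * sqrt s ^ n) sums B"
    using sqrt_s geometric_sums[of "sqrt s"] sums_mult by (fastforce simp: B_def)
  then have tail: "(\<lambda>m. E * A2_norm \<beta> h * sqrt s ^ Suc m) sums (B - E * A2_norm \<beta> h)"
    using sums_Suc_iff[of "\<lambda>n. E * A2_norm \<beta> h * sqrt s ^ n" "B - E * A2_norm \<beta> h"]
    by (simp del: power_Suc)
  have "cmod (\<Sum>m. of_real ((1 / c) ^ Suc m) * chart_remainder K h (of_real (\<tau> / s ^ Suc m)))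
      \<le> B - E * A2_norm \<beta> h"
    using norm_suminf_le[OF backward_term_bound[OF h \<tau>] sums_summable[OF tail]] sums_unique[OF tail]
    by simp
  moreover have "0 \<le> \<tau>"
    using s_pos \<tau> by simp
  then have "cmod (\<Sum>n. of_real (c ^ n) * chart_remainder K h (of_real (\<tau> * s ^ n))) \<le> B"
    using norm_suminf_le[OF forward_term_bound[OF h _ \<tau>(2)] sums_summable[OF geometric]]
      sums_unique[OF geometric] by simp
  ultimately have "cmod (eigenfunctional \<tau> h) \<le> 2 * B"
    unfolding eigenfunctional_def using norm_triangle_ineq \<open>E * A2_norm \<beta> h \<ge> 0\<close> by (smt (verit))
  then show "cmod (eigenfunctional \<tau> h) \<le> (2 * E / (1 - sqrt s)) * A2_norm \<beta> h"
    by (simp add: B_def)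
qed

lemma eigenfunctional_diff_cmult:
  assumes "F \<in> A2 \<beta>" "G \<in> A2 \<beta>" "s \<le> \<tau>" "\<tau> \<le> 1"
  shows "eigenfunctional \<tau> (\<lambda>z. F z - a * G z) = eigenfunctional \<tau> F - a * eigenfunctional \<tau> G"
proof -
  have "0 \<le> \<tau>"
    using assms s_pos by simp
  note remainder = chart_remainder_diff_cmult[OF A2_holomorphic[OF assms(1)] A2_holomorphic[OF assms(2)]]
  note sums1 = summable_sums[OF forward_summable[OF assms(1) \<open>0 \<le> \<tau>\<close> assms(4)]]
    sums_mult[OF summable_sums[OF forward_summable[OF assms(2) \<open>0 \<le> \<tau>\<close> assms(4)]], of a]
  note sums2 = summable_sums[OF backward_summable[OF assms(1,3,4)]]
    sums_mult[OF summable_sums[OF backward_summable[OF assms(2,3,4)]], of a]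
  show ?thesis
    unfolding eigenfunctional_def remainder using sums_unique[OF sums_diff[OF sums1]] sums_unique[OF sums_diff[OF sums2]]
    by (simp add: algebra_simps del: power_Suc)
qed

lemma eigenfunctional_compose_psi:
  assumes "f holomorphic_on ball 0 1" "0 < t" "t < 1" "0 \<le> \<tau>"
  shows "eigenfunctional \<tau> (f \<circ> psi (of_real t)) = eigenfunctional (t * \<tau>) f"
proof -
  have "0 \<le> \<tau> * s ^ n" "0 \<le> \<tau> / s ^ Suc n" for n
    using assms(4) s_pos by simp_all
  then have "chart_remainder K (f \<circ> psi (of_real t)) (of_real (\<tau> * s ^ n))
      = chart_remainder K f (of_real (t * \<tau> * s ^ n))"
    "chart_remainder K (f \<circ> psi (of_real t)) (of_real (\<tau> / s ^ Suc n))
      = chart_remainder K f (of_real (t * \<tau> / s ^ Suc n))" for n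
    using chart_remainder_compose_psi[OF assms(2,3,1)] by (simp_all only: mult.assoc times_divide_eq_right)
  then show ?thesis
    unfolding eigenfunctional_def by simp
qed

lemma forward_sum_dilation:
  assumes "h \<in> A2 \<beta>" "0 \<le> \<tau>" "\<tau> \<le> 1"
  shows "(\<Sum>n. of_real (c ^ n) * chart_remainder K h (of_real (s * \<tau> * s ^ n)))
    = of_real (1 / c) * ((\<Sum>n. of_real (c ^ n) * chart_remainder K h (of_real (\<tau> * s ^ n)))
      - chart_remainder K h (of_real \<tau>))"
proof -
  define a where "a n = of_real (c ^ n) * chart_remainder K h (of_real (\<tau> * s ^ n))" for n
  have a: "summable a"
    using forward_summable[OF assms] by (simp add: a_def[abs_def])
  have a_Suc: "of_real (c ^ n) * chart_remainder K h (of_real (s * \<tau> * s ^ n)) = of_real (1 / c) * a (Suc n)" for n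
  proof -
    have shift: "(1 / c) * c ^ Suc n = c ^ n" "\<tau> * s ^ Suc n = s * \<tau> * s ^ n"
      using c_pos by simp_all
    have "of_real (1 / c) * a (Suc n)
        = of_real ((1 / c) * c ^ Suc n) * chart_remainder K h (of_real (\<tau> * s ^ Suc n))"
      unfolding a_def of_real_mult by (simp only: mult.assoc)
    then show ?thesis
      unfolding shift by simp
  qed
  have "(\<Sum>n. of_real (c ^ n) * chart_remainder K h (of_real (s * \<tau> * s ^ n))) = of_real (1 / c) * (suminf a - a 0)"
    by (simp only: a_Suc suminf_mult[OF summable_Suc_iff[THEN iffD2, OF a]] suminf_split_head[OF a])
  moreover have "a 0 = chart_remainder K h (of_real \<tau>)"
    by (simp add: a_def)
  ultimately show ?thesis
    by (simp only: a_def[abs_def])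
qed

lemma backward_sum_dilation:
  assumes "h \<in> A2 \<beta>" "s \<le> \<tau>" "\<tau> \<le> 1"
  shows "(\<Sum>m. of_real ((1 / c) ^ Suc m) * chart_remainder K h (of_real (s * \<tau> / s ^ Suc m)))
    = of_real (1 / c) * (chart_remainder K h (of_real \<tau>)
      + (\<Sum>m. of_real ((1 / c) ^ Suc m) * chart_remainder K h (of_real (\<tau> / s ^ Suc m))))"
proof -
  define b where "b m = of_real ((1 / c) ^ Suc m) * chart_remainder K h (of_real (\<tau> / s ^ Suc m))" for m
  define u where "u m = of_real ((1 / c) ^ Suc m) * chart_remainder K h (of_real (s * \<tau> / s ^ Suc m))" for m
  have b: "summable b"
    using backward_summable[OF assms] by (simp add: b_def[abs_def])
  have u_Suc: "u (Suc m) = of_real (1 / c) * b m" for m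
  proof -
    have shift: "(1 / c) * (1 / c) ^ Suc m = (1 / c) ^ Suc (Suc m)" "\<tau> / s ^ Suc m = s * \<tau> / s ^ Suc (Suc m)"
      using s_pos by simp_all
    have "of_real (1 / c) * b m = of_real ((1 / c) * (1 / c) ^ Suc m) * chart_remainder K h (of_real (\<tau> / s ^ Suc m))"
      unfolding b_def of_real_mult by (simp only: mult.assoc)
    then show ?thesis
      unfolding shift u_def by (rule sym)
  qed
  have "summable u"
    unfolding summable_Suc_iff[symmetric, of u] u_Suc by (rule summable_mult[OF b])
  then have "suminf u = u 0 + (\<Sum>m. u (Suc m))"
    by (simp add: suminf_split_head)
  also have "\<dots> = of_real (1 / c) * (chart_remainder K h (of_real \<tau>) + suminf b)"
    unfolding u_Suc suminf_mult[OF b] using s_pos by (simp add: u_def algebra_simps)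
  finally show ?thesis
    by (simp add: u_def[abs_def] b_def[abs_def])
qed

lemma eigenfunctional_dilation:
  assumes "h \<in> A2 \<beta>" "s \<le> \<tau>" "\<tau> \<le> 1"
  shows "eigenfunctional (s * \<tau>) h = of_real (1 / c) * eigenfunctional \<tau> h"
  using forward_sum_dilation[OF assms(1) _ assms(3)] backward_sum_dilation[OF assms] assms(2) s_pos
  by (simp add: eigenfunctional_def algebra_simps)

lemma eigenfunctional_compose_psi_s:
  assumes "h \<in> A2 \<beta>" "s \<le> \<tau>" "\<tau> \<le> 1"
  shows "eigenfunctional \<tau> (h \<circ> psi (of_real s)) = of_real (1 / c) * eigenfunctional \<tau> h"
  using eigenfunctional_compose_psi[OF A2_holomorphic[OF assms(1)] s_pos s_less_1] eigenfunctional_dilation[OF assms] assms s_pos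
  by simp

end

lemma exists_dilation_eigenfunctional:
  assumes "\<beta> > -1" "0 < t" "t < 1"
  obtains K E where "dilation_eigenfunctional \<beta> K t E"
proof -
  obtain n :: nat where "(2 + \<beta>) / 2 \<le> real n"
    using real_arch_simple by blast
  then have K: "1 \<le> n + 1" "2 + \<beta> \<le> 2 * (real (n + 1) - 1)"
    by auto
  obtain E where "E > 0"
    "\<And>h x. h \<in> A2 \<beta> \<Longrightarrow> 0 \<le> x \<Longrightarrow> x \<le> 1 \<Longrightarrow>
      cmod (chart_remainder (n + 1) h (of_real x)) \<le> E * A2_norm \<beta> h * x ^ (n + 1)"
    "\<And>h x. h \<in> A2 \<beta> \<Longrightarrow> 1 \<le> x \<Longrightarrow>
      cmod (chart_remainder (n + 1) h (of_real x)) \<le> E * A2_norm \<beta> h * x ^ (n + 1 - 1)"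
    using chart_remainder_bound[OF assms(1) K] by blast
  then show thesis
    using that[of "n + 1" E] assms by (simp add: dilation_eigenfunctional_def)
qed

section \<open>Linear independence of two eigenfunctionals\<close>

definition test_poly :: "nat \<Rightarrow> complex \<Rightarrow> complex" where
  "test_poly M z = z ^ M * (1 - z) ^ M"

lemma fps_one_minus_X_power_nth_eq_0: "M < k \<Longrightarrow> ((1 - fps_X) ^ M :: complex fps) $ k = 0"
proof (induction M arbitrary: k)
  case (Suc M)
  have split: "((1 - fps_X) ^ Suc M :: complex fps) = (1 - fps_X) ^ M - fps_X * (1 - fps_X) ^ M"
    by (simp add: algebra_simps)
  show ?case
    unfolding split using Suc by (cases k) (auto simp: fps_X_mult_nth)
qed simp

lemma test_poly_in_A2: "test_poly M \<in> A2 \<beta>"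
proof (rule A2_if_finite_support)
  show "test_poly M holomorphic_on ball 0 1"
    unfolding test_poly_def by (intro holomorphic_intros)
  have "test_poly M has_fps_expansion fps_X ^ M * (1 - fps_X) ^ M"
    unfolding test_poly_def
    by (intro has_fps_expansion_mult[where f = "\<lambda>z. z ^ M"] has_fps_expansion_fps_X_power
        has_fps_expansion_power[where f = "\<lambda>z. 1 - z"] has_fps_expansion_diff has_fps_expansion_1
        has_fps_expansion_fps_X)
  then have "taylor_coeff (test_poly M) n = (fps_X ^ M * (1 - fps_X) ^ M) $ n" for n
    using fps_nth_fps_expansion by (fastforce simp: taylor_coeff_def)
  then have "taylor_coeff (test_poly M) n = 0" if "n \<notin> {..2 * M}" for n
    using that fps_one_minus_X_power_nth_eq_0[of M "n - M"] by (simp add: fps_X_power_mult_nth)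
  then have "{n. taylor_coeff (test_poly M) n \<noteq> 0} \<subseteq> {..2 * M}"
    by blast
  then show "finite {n. taylor_coeff (test_poly M) n \<noteq> 0}"
    using finite_subset by blast
qed

text \<open>On the positive axis of the chart, \<open>test_poly M\<close> becomes \<open>bump M\<close>: it vanishes to order \<open>M\<close>
  at \<open>0\<close> and \<open>\<infinity>\<close>, is invariant under \<open>x \<mapsto> 1/x\<close> and peaks at \<open>x = 1\<close>, ever more sharply as
  \<open>M\<close> grows.\<close>
definition bump :: "nat \<Rightarrow> real \<Rightarrow> real" where
  "bump M x = (x / (1 + x)\<^sup>2) ^ M"

lemma taylor_coeff_chart_test_poly: "m < M \<Longrightarrow> taylor_coeff (chart (test_poly M)) m = 0"
proof -
  assume "m < M"
  define q where "q v = (1 / (1 + v)) ^ M * (1 - v / (1 + v)) ^ M" for v :: complex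
  have "q holomorphic_on ball 0 (1 / 2)"
    unfolding q_def using norm_div_one_plus(1) by (intro holomorphic_intros) auto
  then have "q has_fps_expansion Abs_fps (taylor_coeff q)"
    by (rule holomorphic_has_fps_expansion_taylor) simp
  moreover have "chart (test_poly M) = (\<lambda>v. v ^ M * q v)"
    by (simp add: fun_eq_iff chart_def test_poly_def q_def power_mult_distrib[symmetric])
  ultimately have "chart (test_poly M) has_fps_expansion fps_X ^ M * Abs_fps (taylor_coeff q)"
    using has_fps_expansion_mult[OF has_fps_expansion_fps_X_power] by simp
  then show ?thesis
    using fps_nth_fps_expansion[of _ _ m] \<open>m < M\<close> by (fastforce simp: taylor_coeff_def fps_X_power_mult_nth)
qed

lemma chart_remainder_test_poly:
  assumes "K \<le> M" "x \<ge> 0"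
  shows "chart_remainder K (test_poly M) (of_real x) = of_real (bump M x)"
proof -
  have "1 - x / (1 + x) = 1 / (1 + x)"
    using assms by (simp add: field_simps)
  then have "(x / (1 + x)) ^ M * (1 - x / (1 + x)) ^ M = bump M x"
    by (simp add: bump_def power2_eq_square flip: power_mult_distrib)
  moreover have "chart (test_poly M) (of_real x) = of_real ((x / (1 + x)) ^ M * (1 - x / (1 + x)) ^ M)"
    by (simp add: chart_def test_poly_def)
  ultimately show ?thesis
    using assms taylor_coeff_chart_test_poly by (simp add: chart_remainder_def)
qed

definition bump_factor :: "real \<Rightarrow> real" where
  "bump_factor x = 4 * x / (1 + x)\<^sup>2"

lemma bump_eq_bump_factor: "bump M x = (1 / 4) ^ M * bump_factor x ^ M"
  by (simp add: bump_def bump_factor_def flip: power_mult_distrib)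

lemma bump_factor_nonneg: "x \<ge> 0 \<Longrightarrow> bump_factor x \<ge> 0"
  by (simp add: bump_factor_def)

lemma bump_factor_le: "x \<ge> 0 \<Longrightarrow> bump_factor x \<le> 4 * x"
  using one_le_power[of "1 + x" 2] by (simp add: bump_factor_def divide_le_eq mult_le_cancel_left1)

lemma bump_factor_inverse: "x > 0 \<Longrightarrow> bump_factor (1 / x) = bump_factor x"
  by (simp add: bump_factor_def field_simps power2_eq_square)

lemma bump_factor_mono:
  assumes "0 \<le> x" "x \<le> y" "y \<le> 1"
  shows "bump_factor x \<le> bump_factor y"
proof -
  have "y * (1 + x)\<^sup>2 - x * (1 + y)\<^sup>2 = (y - x) * (1 - x * y)"
    by (simp add: power2_eq_square algebra_simps)
  moreover have "(y - x) * (1 - x * y) \<ge> 0"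
    using assms mult_le_one[of x y] by simp
  ultimately have "4 * x * (1 + y)\<^sup>2 / (1 + x)\<^sup>2 \<le> 4 * y"
    using assms by (simp add: pos_divide_le_eq)
  then have "4 * x / (1 + x)\<^sup>2 * (1 + y)\<^sup>2 \<le> 4 * y"
    by simp
  then show ?thesis
    unfolding bump_factor_def using assms by (simp add: pos_le_divide_eq)
qed

lemma bump_factor_less_1:
  assumes "0 \<le> x" "x < 1"
  shows "bump_factor x < 1"
proof -
  have "0 < (1 - x)\<^sup>2"
    using assms by simp
  then have "4 * x < (1 + x)\<^sup>2"
    by (simp add: power2_eq_square algebra_simps)
  then show ?thesis
    using assms by (simp add: bump_factor_def)
qed

lemma bump_inverse: "x > 0 \<Longrightarrow> bump M (1 / x) = bump M x"
  using bump_factor_inverse by (simp add: bump_eq_bump_factor)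

lemma bump_le_bump_factor_power:
  assumes "0 \<le> x" "x \<le> r" "r \<le> 1" "K \<le> M"
  shows "bump M x \<le> (1 / 4) ^ M * bump_factor r ^ (M - K) * (4 * x) ^ K"
proof -
  have "bump M x = (1 / 4) ^ M * (bump_factor x ^ (M - K) * bump_factor x ^ K)"
    using assms(4) by (simp add: bump_eq_bump_factor flip: power_add)
  also have "\<dots> \<le> (1 / 4) ^ M * (bump_factor r ^ (M - K) * (4 * x) ^ K)"
    using assms bump_factor_mono[of x r] bump_factor_le[of x] bump_factor_nonneg[of x]
    by (intro mult_left_mono mult_mono power_mono) auto
  finally show ?thesis
    by (simp add: mult_ac)
qed

context dilation_eigenfunctional
begin

definition test_value :: "nat \<Rightarrow> real \<Rightarrow> real" where
  "test_value M \<tau> = (\<Sum>n. c ^ n * bump M (\<tau> * s ^ n)) + (\<Sum>m. (1 / c) ^ Suc m * bump M (\<tau> / s ^ Suc m))"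

lemma eigenfunctional_test_poly:
  assumes "K \<le> M" "s \<le> \<tau>" "\<tau> \<le> 1"
  shows "eigenfunctional \<tau> (test_poly M) = of_real (test_value M \<tau>)"
    and "summable (\<lambda>n. c ^ n * bump M (\<tau> * s ^ n))"
    and "summable (\<lambda>m. (1 / c) ^ Suc m * bump M (\<tau> / s ^ Suc m))"
proof -
  have "0 \<le> \<tau>"
    using assms s_pos by simp
  have forward: "of_real (c ^ n) * chart_remainder K (test_poly M) (of_real (\<tau> * s ^ n))
      = of_real (c ^ n * bump M (\<tau> * s ^ n))" for n
    using chart_remainder_test_poly[OF assms(1), of "\<tau> * s ^ n"] \<open>0 \<le> \<tau>\<close> s_pos by simp
  have backward: "of_real ((1 / c) ^ Suc m) * chart_remainder K (test_poly M) (of_real (\<tau> / s ^ Suc m))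
      = of_real ((1 / c) ^ Suc m * bump M (\<tau> / s ^ Suc m))" for m
    using chart_remainder_test_poly[OF assms(1), of "\<tau> / s ^ Suc m"] \<open>0 \<le> \<tau>\<close> s_pos by (simp del: power_Suc)
  show "summable (\<lambda>n. c ^ n * bump M (\<tau> * s ^ n))"
    using forward_summable[OF test_poly_in_A2[of M \<beta>] \<open>0 \<le> \<tau>\<close> assms(3)] unfolding forward summable_of_real_iff .
  moreover show "summable (\<lambda>m. (1 / c) ^ Suc m * bump M (\<tau> / s ^ Suc m))"
    using backward_summable[OF test_poly_in_A2[of M \<beta>] assms(2,3)] unfolding backward summable_of_real_iff .
  ultimately show "eigenfunctional \<tau> (test_poly M) = of_real (test_value M \<tau>)"
    unfolding eigenfunctional_def forward backward test_value_def by (simp add: suminf_of_real)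
qed

lemma test_value_at_1:
  assumes "K \<le> M"
  shows "test_value M 1 \<ge> (1 / 4) ^ M"
proof -
  note summable = eigenfunctional_test_poly(2,3)[OF assms, of 1]
  have "(1 / 4) ^ M = (\<Sum>n\<in>{0}. c ^ n * bump M (1 * s ^ n))"
    by (simp add: bump_def)
  also have "\<dots> \<le> (\<Sum>n. c ^ n * bump M (1 * s ^ n))"
    using summable s_pos s_less_1 c_pos by (intro sum_le_suminf) (auto simp: bump_def)
  finally show ?thesis
    using suminf_nonneg[OF summable(2)] s_pos s_less_1 c_pos by (simp add: test_value_def bump_def)
qed

lemma test_value_nonneg:
  assumes "K \<le> M" "s \<le> \<tau>" "\<tau> \<le> 1"
  shows "test_value M \<tau> \<ge> 0"
  using suminf_nonneg[OF eigenfunctional_test_poly(2)[OF assms]] suminf_nonneg[OF eigenfunctional_test_poly(3)[OF assms]]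
    assms s_pos c_pos by (simp add: test_value_def bump_def)

lemma forward_bump_term_le:
  assumes "K \<le> M"
  shows "c ^ n * bump M (sqrt s * s ^ n) \<le> (1 / 4) ^ M * bump_factor (sqrt s) ^ (M - K) * 4 ^ K * sqrt s ^ n"
proof -
  define Z where "Z = (1 / 4) ^ M * bump_factor (sqrt s) ^ (M - K)"
  have "Z \<ge> 0"
    using bump_factor_nonneg[of "sqrt s"] s_pos by (simp add: Z_def)
  have "s ^ n \<le> 1"
    using s_pos s_less_1 by (simp add: power_le_one)
  then have "c ^ n * bump M (sqrt s * s ^ n) \<le> c ^ n * (Z * (4 * (sqrt s * s ^ n)) ^ K)"
    using bump_le_bump_factor_power[OF _ _ _ assms, of "sqrt s * s ^ n" "sqrt s"] sqrt_s c_pos s_pos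
    by (intro mult_left_mono) (auto simp: Z_def mult_left_le)
  also have "\<dots> = Z * 4 ^ K * sqrt s ^ K * (c * s ^ K) ^ n"
    by (simp add: power_mult_distrib power_mult[symmetric] mult_ac)
  also have "\<dots> \<le> Z * 4 ^ K * 1 * sqrt s ^ n"
    using sqrt_s \<open>Z \<ge> 0\<close> unfolding c_mult_power_s
    by (intro mult_right_mono mult_left_mono power_le_one) auto
  finally show ?thesis
    by (simp add: Z_def)
qed

lemma backward_bump_term_le:
  assumes "K \<le> M"
  shows "(1 / c) ^ Suc m * bump M (sqrt s / s ^ Suc m)
    \<le> (1 / 4) ^ M * bump_factor (sqrt s) ^ (M - K) * 4 ^ K * (1 / sqrt s) ^ K * sqrt s ^ Suc m"
proof -
  define Z where "Z = (1 / 4) ^ M * bump_factor (sqrt s) ^ (M - K)"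
  define y where "y = s ^ Suc m / sqrt s"
  have "Z \<ge> 0"
    using bump_factor_nonneg[of "sqrt s"] s_pos by (simp add: Z_def)
  have "s ^ Suc m \<le> s"
    using s_pos s_less_1 by (simp add: power_le_one mult_left_le)
  then have "y \<le> s / sqrt s"
    unfolding y_def using sqrt_s by (intro divide_right_mono) auto
  then have y: "0 < y" "y \<le> sqrt s"
    using s_pos by (simp_all add: y_def real_div_sqrt del: power_Suc)
  have "bump M (sqrt s / s ^ Suc m) = bump M y"
    using bump_inverse[OF y(1)] by (simp add: y_def)
  then have "(1 / c) ^ Suc m * bump M (sqrt s / s ^ Suc m) \<le> (1 / c) ^ Suc m * (Z * (4 * y) ^ K)"
    using bump_le_bump_factor_power[OF _ y(2) _ assms] y sqrt_s c_pos
    by (intro mult_left_mono) (auto simp: Z_def)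
  also have "\<dots> = Z * 4 ^ K * (1 / sqrt s) ^ K * ((1 / c) * s ^ K) ^ Suc m"
    by (simp add: y_def power_mult_distrib power_divide power_mult[symmetric] mult_ac del: power_Suc)
  also have "\<dots> \<le> Z * 4 ^ K * (1 / sqrt s) ^ K * sqrt s ^ Suc m"
    using inverse_c_mult_power_s_le c_pos s_pos \<open>Z \<ge> 0\<close> by (intro mult_left_mono power_mono) auto
  finally show ?thesis
    by (simp add: Z_def del: power_Suc)
qed

lemma test_value_at_sqrt:
  assumes "K \<le> M"
  shows "test_value M (sqrt s)
    \<le> (1 / 4) ^ M * bump_factor (sqrt s) ^ (M - K) * (4 ^ K * (1 + (1 / sqrt s) ^ K) / (1 - sqrt s))"
proof -
  define Z where "Z = (1 / 4) ^ M * bump_factor (sqrt s) ^ (M - K) * 4 ^ K"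
  have "Z \<ge> 0"
    using bump_factor_nonneg[of "sqrt s"] s_pos by (simp add: Z_def)
  note summable = eigenfunctional_test_poly(2,3)[OF assms s_le_sqrt_s less_imp_le[OF sqrt_s(2)]]
  have geometric: "(\<lambda>n. Z * sqrt s ^ n) sums (Z * (1 / (1 - sqrt s)))"
    using sqrt_s by (intro sums_mult geometric_sums) auto
  then have "(\<lambda>m. Z * sqrt s ^ Suc m) sums (Z * (1 / (1 - sqrt s)) - Z)"
    using sums_Suc_iff[of "\<lambda>n. Z * sqrt s ^ n" "Z * (1 / (1 - sqrt s)) - Z"] by (simp del: power_Suc)
  from sums_mult[OF this, of "(1 / sqrt s) ^ K"]
  have "(\<lambda>m. Z * (1 / sqrt s) ^ K * sqrt s ^ Suc m) sums ((1 / sqrt s) ^ K * (Z * (1 / (1 - sqrt s)) - Z))"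
    by (simp add: mult_ac del: power_Suc)
  then have "(\<Sum>m. (1 / c) ^ Suc m * bump M (sqrt s / s ^ Suc m)) \<le> (1 / sqrt s) ^ K * (Z * (1 / (1 - sqrt s)) - Z)"
    using suminf_le[OF backward_bump_term_le[OF assms] summable(2)] by (simp add: Z_def sums_iff mult_ac)
  moreover have "(\<Sum>n. c ^ n * bump M (sqrt s * s ^ n)) \<le> Z * (1 / (1 - sqrt s))"
    using suminf_le[OF forward_bump_term_le[OF assms] summable(1)] geometric by (simp add: Z_def sums_iff)
  moreover have "(1 / sqrt s) ^ K * (Z * (1 / (1 - sqrt s)) - Z) \<le> (1 / sqrt s) ^ K * (Z * (1 / (1 - sqrt s)))"
    using \<open>Z \<ge> 0\<close> sqrt_s by (intro mult_left_mono) auto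
  ultimately have "test_value M (sqrt s) \<le> Z * (1 / (1 - sqrt s)) + (1 / sqrt s) ^ K * (Z * (1 / (1 - sqrt s)))"
    unfolding test_value_def by linarith
  then show ?thesis
    by (simp add: Z_def algebra_simps add_divide_distrib)
qed

text \<open>For large \<open>M\<close> the bump concentrates at \<open>1\<close>, so \<open>eigenfunctional (sqrt s)\<close> sees much less of
  \<open>test_poly M\<close> than \<open>eigenfunctional 1\<close> does.\<close>
lemma test_value_separation:
  obtains M where "K \<le> M" "test_value M (sqrt s) * test_value M (sqrt s) < test_value M 1 * test_value M 1 * (1 / c)"
proof -
  define D where "D = 4 ^ K * (1 + (1 / sqrt s) ^ K) / (1 - sqrt s)"
  define q where "q = bump_factor (sqrt s)"
  have "D > 0"
    using sqrt_s by (simp add: D_def add_pos_nonneg)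
  have "0 \<le> q" "q < 1"
    using bump_factor_nonneg bump_factor_less_1 sqrt_s by (auto simp: q_def)
  then obtain n where "q ^ n < (1 / sqrt c) / D"
    using real_arch_pow_inv[of "(1 / sqrt c) / D" q] \<open>D > 0\<close> c_pos by auto
  then have n: "q ^ n * D < 1 / sqrt c"
    unfolding pos_less_divide_eq[OF \<open>D > 0\<close>] .
  define M where "M = K + n"
  define L1 L2 where "L1 = test_value M 1" and "L2 = test_value M (sqrt s)"
  have "K \<le> M"
    by (simp add: M_def)
  have L1: "(1 / 4) ^ M \<le> L1"
    using test_value_at_1[OF \<open>K \<le> M\<close>] by (simp add: L1_def)
  have "L2 \<le> (1 / 4) ^ M * (q ^ n * D)"
    using test_value_at_sqrt[OF \<open>K \<le> M\<close>] by (simp add: L2_def M_def q_def D_def mult.assoc)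
  also have "\<dots> < (1 / 4) ^ M * (1 / sqrt c)"
    using n by (intro mult_strict_left_mono) simp_all
  finally have "L2 * L2 < ((1 / 4) ^ M * (1 / sqrt c)) * ((1 / 4) ^ M * (1 / sqrt c))"
    using test_value_nonneg[OF \<open>K \<le> M\<close> s_le_sqrt_s] sqrt_s by (intro mult_strict_mono) (auto simp: L2_def)
  also have "\<dots> = ((1 / 4) ^ M) * ((1 / 4) ^ M) * (1 / c)"
    using c_pos by (simp add: field_simps)
  also have "\<dots> \<le> L1 * L1 * (1 / c)"
    using L1 c_pos order_trans[OF zero_le_power L1] by (intro mult_right_mono mult_mono) auto
  finally show thesis
    using that[OF \<open>K \<le> M\<close>] by (simp add: L1_def L2_def)
qed

text \<open>For \<open>F2 = F1 \<circ> psi (sqrt s)\<close> the dilation identities give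
  \<open>eigenfunctional 1 F2 = eigenfunctional (sqrt s) F1\<close> and
  \<open>eigenfunctional (sqrt s) F2 = c\<^sup>-\<^sup>1 eigenfunctional 1 F1\<close>, so the determinant is
  \<open>c\<^sup>-\<^sup>1 L\<^sub>1\<^sup>2 - L\<^sub>2\<^sup>2\<close> with \<open>L\<^sub>1 = test_value M 1\<close>, \<open>L\<^sub>2 = test_value M (sqrt s)\<close>.\<close>
lemma independent_test_functions:
  obtains F1 F2 where "F1 \<in> A2 \<beta>" "F2 \<in> A2 \<beta>"
    "eigenfunctional 1 F1 * eigenfunctional (sqrt s) F2
      - eigenfunctional 1 F2 * eigenfunctional (sqrt s) F1 \<noteq> 0"
proof -
  obtain M where "K \<le> M"
    and separation: "test_value M (sqrt s) * test_value M (sqrt s) < test_value M 1 * test_value M 1 * (1 / c)"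
    using test_value_separation by blast
  define F2 where "F2 = test_poly M \<circ> psi (of_real (sqrt s))"
  have value_F1: "eigenfunctional 1 (test_poly M) = of_real (test_value M 1)"
    "eigenfunctional (sqrt s) (test_poly M) = of_real (test_value M (sqrt s))"
    using eigenfunctional_test_poly(1)[OF \<open>K \<le> M\<close>] s_le_sqrt_s sqrt_s s_less_1 by auto
  have value_F2: "eigenfunctional 1 F2 = of_real (test_value M (sqrt s))"
    "eigenfunctional (sqrt s) F2 = of_real (1 / c) * of_real (test_value M 1)"
    using eigenfunctional_compose_psi[of "test_poly M" "sqrt s"] eigenfunctional_dilation[of "test_poly M" 1]
      test_poly_in_A2 sqrt_s s_pos value_F1 by (simp_all add: F2_def A2_holomorphic)
  have "eigenfunctional 1 (test_poly M) * eigenfunctional (sqrt s) F2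
      - eigenfunctional 1 F2 * eigenfunctional (sqrt s) (test_poly M)
      = of_real (test_value M 1 * test_value M 1 * (1 / c) - test_value M (sqrt s) * test_value M (sqrt s))"
    unfolding value_F1 value_F2 by (simp add: algebra_simps)
  moreover have "test_value M 1 * test_value M 1 * (1 / c) - test_value M (sqrt s) * test_value M (sqrt s) \<noteq> 0"
    using separation by simp
  moreover have "F2 \<in> A2 \<beta>"
    unfolding F2_def using A2_compose_psi[OF beta _ _ test_poly_in_A2] sqrt_s by auto
  ultimately show thesis
    using that[OF test_poly_in_A2] of_real_eq_0_iff by metis
qed

lemma not_cyclic_comp_op_psi: "\<not> cyclic_on_A2 \<beta> (comp_op (psi (of_real s)))"
proof -
  obtain F1 F2 where F: "F1 \<in> A2 \<beta>" "F2 \<in> A2 \<beta>"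
    "eigenfunctional 1 F1 * eigenfunctional (sqrt s) F2
      - eigenfunctional 1 F2 * eigenfunctional (sqrt s) F1 \<noteq> 0"
    by (rule independent_test_functions)
  obtain B where B: "\<forall>h\<in>A2 \<beta>. \<forall>\<tau>. s \<le> \<tau> \<longrightarrow> \<tau> \<le> 1 \<longrightarrow> cmod (eigenfunctional \<tau> h) \<le> B * A2_norm \<beta> h"
    using eigenfunctional_bound by blast
  have maps: "comp_op (psi (of_real s)) h \<in> A2 \<beta>" if "h \<in> A2 \<beta>" for h
    using A2_compose_psi[OF beta s_pos s_less_1 that] by (simp add: comp_op_def)
  have eigen: "eigenfunctional \<tau> (comp_op (psi (of_real s)) h) = of_real (1 / c) * eigenfunctional \<tau> h"
    if "h \<in> A2 \<beta>" "s \<le> \<tau>" "\<tau> \<le> 1" for h \<tau>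
    unfolding comp_op_def by (rule eigenfunctional_compose_psi_s[OF that])
  show ?thesis
    by (rule not_cyclic_on_A2_if_eigenfunctionals[where \<mu> = "of_real (1 / c)" and B = B, OF beta maps _ _ _ _ _ _ F])
      (use B s_le_sqrt_s sqrt_s s_less_1 eigenfunctional_diff_cmult eigen in auto)
qed

end

theorem lemma4p2:
  fixes \<beta> :: real and s :: complex
  assumes "\<beta> > -1"
    and "0 < cmod s" and "cmod s < 1"
    and "\<forall>z\<in>ball 0 1. 1 - (1 - s) * z \<noteq> 0"
    and "\<forall>z\<in>ball 0 1. psi s z \<in> ball 0 1"
  shows "\<not> cyclic_on_A2 \<beta> (comp_op (psi s))"
proof -
  obtain t where s: "s = of_real t" and t: "0 < t" "t < 1"
    using psi_self_map_parameter_real[OF assms(2-5)] .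
  obtain K E where "dilation_eigenfunctional \<beta> K t E"
    using exists_dilation_eigenfunctional[OF assms(1) t] .
  then show ?thesis
    unfolding s by (rule dilation_eigenfunctional.not_cyclic_comp_op_psi)
qed

end
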